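(* Let $0<r<q-1$. Then \[\mathrm{ind}_{IZ}^G\chi_r\neq \mathrm{Ker}\,T_{-1,0}\oplus\mathrm{Ker}\,T_{1,2}.\]
   Context: $F$ is a finite extension of $\mathbb Q_p$ with ring of integers $\mathcal O$, uniformizer $\varpi$, residue field $\mathbb F_q$; $[x]$ is the multiplicative representative of $x\in\mathbb F_q$; $\bar a$ the reduction of $a\in\mathcal O$. $G=\mathrm{GL}_2(F)$, $K=\mathrm{GL}_2(\mathcal O)$, $Z$ the centre, $I$ the Iwahori subgroup of $K$ (lower-left entry in $\varpi\mathcal O$). $\chi_r:IZ\to\overline{\mathbb F}_p^\times$, $\begin{pmatrix} a&b\\ \varpi c&d\end{pmatrix}\mapsto\bar d^{\,r}$, $\mathrm{diag}(\varpi,\varpi)\mapsto1$; $\mathrm{ind}_{IZ}^G\chi_r$ is the compact induction, and $[g,1]$ denotes the element supported on $IZg^{-1}$ with value $1$ at $g^{-1}$. With $\beta=\begin{pmatrix}0&1\\ \varpi&0\end{pmatrix}$, $w=\begin{pmatrix}0&1\\1&0\end{pmatrix}$, $I_1=\{[\lambda]:\lambda\in\mathbb F_q\}$, $T_{-1,0},T_{1,2}$ are the $G$-endomorphisms of $\mathrm{ind}_{IZ}^G\chi_r$ with $T_{-1,0}[g,1]=\sum_{\lambda\in I_1}[g\begin{pmatrix}\varpi&\lambda\\0&1\end{pmatrix},1]$ and $T_{1,2}[g,1]=\sum_{\lambda\in I_1}[g\beta\begin{pmatrix}1&\lambda\\0&1\end{pmatrix}w,1]$. (It is known that $\mathrm{Ker}\,T_{-1,0}\cap\mathrm{Ker}\,T_{1,2}=0$.)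 *)

theory Defs
  imports "HOL-Computational_Algebra.Polynomial"
begin

datatype 'a m2 = M2 'a 'a 'a 'a  (* M2 a b c d = ((a,b),(c,d)) *)

fun m2_mult :: "'a::comm_ring_1 m2 \<Rightarrow> 'a m2 \<Rightarrow> 'a m2" where
  "m2_mult (M2 a b c d) (M2 a' b' c' d') =
     M2 (a*a' + b*c') (a*b' + b*d') (c*a' + d*c') (c*b' + d*d')"

fun m2_det :: "'a::comm_ring_1 m2 \<Rightarrow> 'a" where
  "m2_det (M2 a b c d) = a*d - b*c"

fun m2_smult :: "'a::comm_ring_1 \<Rightarrow> 'a m2 \<Rightarrow> 'a m2" where
  "m2_smult s (M2 a b c d) = M2 (s*a) (s*b) (s*c) (s*d)"

fun m2_entries :: "'a m2 \<Rightarrow> 'a set" where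
  "m2_entries (M2 a b c d) = {a, b, c, d}"

fun m2_lowleft :: "'a m2 \<Rightarrow> 'a" where
  "m2_lowleft (M2 a b c d) = c"

fun m2_lowright :: "'a m2 \<Rightarrow> 'a" where
  "m2_lowright (M2 a b c d) = d"

definition GL2 :: "'a::field m2 set" where
  "GL2 = {g. m2_det g \<noteq> 0}"

text \<open>Normalised discrete valuation v : F^x -> Z (surjective); the value at 0 is irrelevant.\<close>
definition discrete_valuation :: "('F::field \<Rightarrow> int) \<Rightarrow> bool" where
  "discrete_valuation v \<longleftrightarrow>
     (\<forall>x y. x \<noteq> 0 \<and> y \<noteq> 0 \<longrightarrow> v (x*y) = v x + v y) \<and>
     (\<forall>x y. x \<noteq> 0 \<and> y \<noteq> 0 \<and> x + y \<noteq> 0 \<longrightarrow> min (v x) (v y) \<le> v (x + y)) \<and>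
     (\<forall>n. \<exists>x. x \<noteq> 0 \<and> v x = n)"

definition valring :: "('F::field \<Rightarrow> int) \<Rightarrow> 'F set" where
  "valring v = {x. x = 0 \<or> 0 \<le> v x}"

definition maxideal :: "('F::field \<Rightarrow> int) \<Rightarrow> 'F set" where
  "maxideal v = {x. x = 0 \<or> 0 < v x}"

definition vcomplete :: "('F::field \<Rightarrow> int) \<Rightarrow> bool" where
  "vcomplete v \<longleftrightarrow>
     (\<forall>X :: nat \<Rightarrow> 'F.
        (\<forall>N::int. \<exists>M. \<forall>m\<ge>M. \<forall>n\<ge>M. X m = X n \<or> N \<le> v (X m - X n)) \<longrightarrow>
        (\<exists>L. \<forall>N::int. \<exists>M. \<forall>n\<ge>M. X n = L \<or> N \<le> v (X n - L)))"

definition residue_rel :: "('F::field \<Rightarrow> int) \<Rightarrow> ('F \<times> 'F) set" where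
  "residue_rel v = {(x, y). x \<in> valring v \<and> y \<in> valring v \<and> x - y \<in> maxideal v}"

text \<open>F is a p-adic field (finite extension of Q_p) with residue field of cardinality q:
  a complete discretely valued field of characteristic 0 whose residue field O/m is finite
  with q elements.\<close>
definition padic_field :: "('F::field \<Rightarrow> int) \<Rightarrow> nat \<Rightarrow> bool" where
  "padic_field v q \<longleftrightarrow>
     CHAR('F) = 0 \<and> discrete_valuation v \<and> vcomplete v \<and>
     finite (valring v // residue_rel v) \<and> card (valring v // residue_rel v) = q"

text \<open>Reduction O -> F_q followed by an embedding F_q -> coefficient field:
  a ring homomorphism on O whose kernel is the maximal ideal.\<close>
definition residue_map :: "('F::field \<Rightarrow> int) \<Rightarrow> ('F \<Rightarrow> 'k::field) \<Rightarrow> bool" where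
  "residue_map v \<iota> \<longleftrightarrow>
     \<iota> 1 = 1 \<and>
     (\<forall>x\<in>valring v. \<forall>y\<in>valring v. \<iota> (x + y) = \<iota> x + \<iota> y \<and> \<iota> (x * y) = \<iota> x * \<iota> y) \<and>
     (\<forall>x\<in>valring v. \<iota> x = 0 \<longleftrightarrow> x \<in> maxideal v)"

text \<open>The set I_1 of multiplicative (Teichmueller) representatives [lambda] of F_q in O,
  i.e. the roots of X^q - X in F.\<close>
definition teich :: "nat \<Rightarrow> 'F::field set" where
  "teich q = {x. x ^ q = x}"

definition Kmax :: "('F::field \<Rightarrow> int) \<Rightarrow> 'F m2 set" where
  "Kmax v = {g. m2_entries g \<subseteq> valring v \<and> m2_det g \<noteq> 0 \<and> v (m2_det g) = 0}"

definition Iwahori :: "('F::field \<Rightarrow> int) \<Rightarrow> 'F m2 set" where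
  "Iwahori v = {g \<in> Kmax v. m2_lowleft g \<in> maxideal v}"

text \<open>IZ (Z = scalar matrices F^x = varpi^Z O^x).\<close>
definition IZ :: "('F::field \<Rightarrow> int) \<Rightarrow> 'F \<Rightarrow> 'F m2 set" where
  "IZ v vpi = {m2_smult (vpi powi n) h | n h. h \<in> Iwahori v}"

text \<open>chi_r on IZ: write g = varpi^n h with h in I (n = v(det g)/2); chi_r(g) = (reduction of h_22)^r.\<close>
definition chi :: "('F::field \<Rightarrow> int) \<Rightarrow> 'F \<Rightarrow> ('F \<Rightarrow> 'k::field) \<Rightarrow> nat \<Rightarrow> 'F m2 \<Rightarrow> 'k" where
  "chi v vpi \<iota> r g = (\<iota> (vpi powi (- (v (m2_det g) div 2)) * m2_lowright g)) ^ r"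

definition ind_space :: "('F::field \<Rightarrow> int) \<Rightarrow> 'F \<Rightarrow> ('F \<Rightarrow> 'k::field) \<Rightarrow> nat \<Rightarrow> ('F m2 \<Rightarrow> 'k) set" where
  "ind_space v vpi \<iota> r =
     {f. (\<forall>g. g \<notin> GL2 \<longrightarrow> f g = 0) \<and>
         (\<forall>h\<in>IZ v vpi. \<forall>g\<in>GL2. f (m2_mult h g) = chi v vpi \<iota> r h * f g) \<and>
         (\<exists>S. finite S \<and> S \<subseteq> GL2 \<and>
              (\<forall>g\<in>GL2. f g \<noteq> 0 \<longrightarrow> (\<exists>s\<in>S. \<exists>h\<in>IZ v vpi. g = m2_mult h s)))}"

definition act :: "'F::field m2 \<Rightarrow> ('F m2 \<Rightarrow> 'k) \<Rightarrow> ('F m2 \<Rightarrow> 'k)" where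
  "act g f = (\<lambda>x. f (m2_mult x g))"

text \<open>[g,1]: supported on IZ g^{-1}, with value 1 at g^{-1} (value chi(h) at h g^{-1}).\<close>
definition bracket :: "('F::field \<Rightarrow> int) \<Rightarrow> 'F \<Rightarrow> ('F \<Rightarrow> 'k::field) \<Rightarrow> nat \<Rightarrow> 'F m2 \<Rightarrow> ('F m2 \<Rightarrow> 'k)" where
  "bracket v vpi \<iota> r g =
     (\<lambda>x. if x \<in> GL2 \<and> m2_mult x g \<in> IZ v vpi then chi v vpi \<iota> r (m2_mult x g) else 0)"

definition G_endo :: "('F::field m2 \<Rightarrow> 'k::field) set \<Rightarrow> (('F m2 \<Rightarrow> 'k) \<Rightarrow> ('F m2 \<Rightarrow> 'k)) \<Rightarrow> bool" where
  "G_endo V T \<longleftrightarrow>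
     (\<forall>f\<in>V. T f \<in> V) \<and>
     (\<forall>f\<in>V. \<forall>f'\<in>V. \<forall>a b. T (\<lambda>x. a * f x + b * f' x) = (\<lambda>x. a * T f x + b * T f' x)) \<and>
     (\<forall>g\<in>GL2. \<forall>f\<in>V. T (act g f) = act g (T f))"

definition beta_mat :: "'F::field \<Rightarrow> 'F m2" where
  "beta_mat vpi = M2 0 1 vpi 0"

definition w_mat :: "'F::field m2" where
  "w_mat = M2 0 1 1 0"

end

(* G acts on the Bruhat-Tits tree of PGL_2(F): G/KZ is its set of vertices, G/IZ its set of
   oriented edges, and an element of ind chi_r is a finitely supported function on edges,
   [g,1] being supported on the edge g.  Suppose [1,1] = f1 + f2 with T_{-1,0} f1 = 0 and
   T_{1,2} f2 = 0; then f1 = -f2 away from the base edge.  Evaluating T_{-1,0} f1 = 0 shows that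
   every edge in the support of f1 has a second edge of that support with the same source, and
   likewise T_{1,2} f2 = 0 gives a second edge of the support of f2 with the same target.  Of two
   edges with a common source (or target), one is not the base edge and leads away from the base
   vertex.  Alternating between f1 and f2 therefore produces supporting edges arbitrarily far from
   the base vertex, contradicting the finiteness of the supports. *)

theory Submission
  imports Defs
begin

lemma finite_transversal_exists:
  assumes "finite A" "\<And>x. x \<in> A \<Longrightarrow> R x x" "\<And>x y. x \<in> A \<Longrightarrow> y \<in> A \<Longrightarrow> R x y \<Longrightarrow> R y x"
  shows "\<exists>B\<subseteq>A. (\<forall>a\<in>A. \<exists>b\<in>B. R b a) \<and> (\<forall>b\<in>B. \<forall>b'\<in>B. R b b' \<longrightarrow> b = b')"
  using assms
proof (induction A rule: finite_induct)
  case empty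
  then show ?case
    by auto
next
  case (insert x A)
  have "\<exists>B\<subseteq>A. (\<forall>a\<in>A. \<exists>b\<in>B. R b a) \<and> (\<forall>b\<in>B. \<forall>b'\<in>B. R b b' \<longrightarrow> b = b')"
    by (rule insert.IH; use insert.prems in blast)
  then obtain B where B: "B \<subseteq> A" "\<forall>a\<in>A. \<exists>b\<in>B. R b a" "\<forall>b\<in>B. \<forall>b'\<in>B. R b b' \<longrightarrow> b = b'"
    by blast
  show ?case
  proof (cases "\<exists>b\<in>B. R b x")
    case True
    then show ?thesis
      using B by (intro exI[of _ B]) auto
  next
    case False
    then have "\<forall>b\<in>B. \<not> R x b"
      using B(1) insert.prems(2) by blast
    then show ?thesis
      using B False insert.prems(1) by (intro exI[of _ "insert x B"]) auto
  qed
qed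

lemma bounded_above_no_ascent:
  fixes \<phi> :: "'a \<Rightarrow> int"
  assumes bounded: "\<forall>x. P x \<longrightarrow> \<phi> x \<le> M" and ascent: "\<forall>x. P x \<longrightarrow> (\<exists>y. P y \<and> \<phi> x < \<phi> y)"
  shows "\<not> P x"
proof
  assume "P x"
  then show False
  proof (induction "nat (M - \<phi> x)" arbitrary: x rule: less_induct)
    case less
    then obtain y where "P y" "\<phi> x < \<phi> y"
      using ascent by blast
    moreover have "nat (M - \<phi> y) < nat (M - \<phi> x)"
      using bounded \<open>P y\<close> \<open>\<phi> x < \<phi> y\<close> by fastforce
    ultimately show False
      using less.hyps by blast
  qed
qed

definition m2_one :: "'a::comm_ring_1 m2" where
  "m2_one = M2 1 0 0 1"

fun m2_inv :: "'a::field m2 \<Rightarrow> 'a m2" where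
  "m2_inv (M2 a b c d) = m2_smult (inverse (a*d - b*c)) (M2 d (-b) (-c) a)"

lemma m2_mult_assoc: "m2_mult (m2_mult x y) z = m2_mult x (m2_mult y z)"
  by (cases x; cases y; cases z) (simp add: algebra_simps)

lemma m2_det_mult: "m2_det (m2_mult x y) = m2_det x * m2_det y"
  by (cases x; cases y) (simp add: algebra_simps)

lemma m2_mult_one_left [simp]: "m2_mult m2_one x = x"
  and m2_mult_one_right [simp]: "m2_mult x m2_one = x"
  by (cases x; simp add: m2_one_def)+

lemma m2_det_one [simp]: "m2_det m2_one = 1"
  by (simp add: m2_one_def)

lemma m2_smult_mult_left: "m2_mult (m2_smult c x) y = m2_smult c (m2_mult x y)"
  by (cases x; cases y) (simp add: algebra_simps)

lemma m2_smult_mult_right: "m2_mult x (m2_smult c y) = m2_smult c (m2_mult x y)"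
  by (cases x; cases y) (simp add: algebra_simps)

lemma m2_smult_smult: "m2_smult c (m2_smult d x) = m2_smult (c*d) x"
  by (cases x) (simp add: algebra_simps)

lemma m2_smult_one [simp]: "m2_smult 1 x = x"
  by (cases x) simp

lemma m2_det_smult: "m2_det (m2_smult c x) = c^2 * m2_det x"
  by (cases x) (simp add: algebra_simps power2_eq_square)

lemma m2_smult_cancel: "c \<noteq> 0 \<Longrightarrow> m2_smult c x = m2_smult c y \<Longrightarrow> x = (y :: 'a::field m2)"
  by (cases x; cases y) auto

lemma GL2_iff_det: "g \<in> GL2 \<longleftrightarrow> m2_det g \<noteq> 0"
  by (simp add: GL2_def)

lemma GL2_mult: "x \<in> GL2 \<Longrightarrow> y \<in> GL2 \<Longrightarrow> m2_mult x y \<in> GL2"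
  by (simp add: GL2_def m2_det_mult)

lemma m2_one_GL2 [simp]: "m2_one \<in> GL2"
  by (simp add: GL2_def)

lemma m2_mult_adjugate:
  "m2_mult (M2 a b c d) (M2 d (-b) (-c) a) = m2_smult (a*d - b*c) m2_one"
  "m2_mult (M2 d (-b) (-c) a) (M2 a b c d) = m2_smult (a*d - b*c) m2_one"
  by (simp_all add: m2_one_def algebra_simps)

lemma m2_mult_inv_right: "g \<in> GL2 \<Longrightarrow> m2_mult g (m2_inv g) = m2_one"
  and m2_mult_inv_left: "g \<in> GL2 \<Longrightarrow> m2_mult (m2_inv g) g = m2_one"
  by (cases g, simp only: m2_inv.simps m2_smult_mult_right m2_smult_mult_left
      m2_mult_adjugate m2_smult_smult, simp add: GL2_def)+

lemma m2_det_inv: "g \<in> GL2 \<Longrightarrow> m2_det (m2_inv g) = inverse (m2_det g)"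
  using arg_cong[OF m2_mult_inv_right, of g m2_det]
  by (simp add: m2_det_mult GL2_def field_simps)

lemma GL2_inv: "g \<in> GL2 \<Longrightarrow> m2_inv g \<in> GL2"
  by (simp add: GL2_def m2_det_inv)

lemma m2_mult_right_cancel: "y \<in> GL2 \<Longrightarrow> m2_mult (m2_mult x y) (m2_inv y) = x"
  by (simp add: m2_mult_assoc m2_mult_inv_right)

lemma m2_mult_left_cancel: "y \<in> GL2 \<Longrightarrow> m2_mult (m2_inv y) (m2_mult y x) = x"
  by (simp add: m2_mult_assoc[symmetric] m2_mult_inv_left)

lemma m2_mult_left_cancel': "y \<in> GL2 \<Longrightarrow> m2_mult y (m2_mult (m2_inv y) x) = x"
  by (simp add: m2_mult_assoc[symmetric] m2_mult_inv_right)

lemma m2_inv_unique: "x \<in> GL2 \<Longrightarrow> m2_mult x y = m2_one \<Longrightarrow> m2_inv x = y"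
  using m2_mult_left_cancel[of x y] by simp

lemma m2_inv_mult:
  "x \<in> GL2 \<Longrightarrow> y \<in> GL2 \<Longrightarrow> m2_inv (m2_mult x y) = m2_mult (m2_inv y) (m2_inv x)"
  by (rule m2_inv_unique)
    (simp_all add: GL2_mult m2_mult_assoc m2_mult_left_cancel' m2_mult_inv_right)

lemma m2_inv_inv: "x \<in> GL2 \<Longrightarrow> m2_inv (m2_inv x) = x"
  by (simp add: m2_inv_unique GL2_inv m2_mult_inv_left)

lemma m2_inv_one [simp]: "m2_inv m2_one = m2_one"
  by (simp add: m2_one_def)

lemma m2_inv_smult:
  "c \<noteq> 0 \<Longrightarrow> h \<in> GL2 \<Longrightarrow> m2_inv (m2_smult c h) = m2_smult (inverse c) (m2_inv h)"
  by (rule m2_inv_unique)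
    (simp_all add: GL2_def m2_det_smult m2_smult_mult_left m2_smult_mult_right
      m2_smult_smult m2_mult_inv_right[unfolded GL2_def])

locale uniformized_valuation =
  fixes v :: "'F::field \<Rightarrow> int" and vpi :: 'F
  assumes discrete_valuation: "discrete_valuation v"
    and uniformizer_nonzero: "vpi \<noteq> 0" and v_uniformizer: "v vpi = 1"
begin

lemma v_mult: "x \<noteq> 0 \<Longrightarrow> y \<noteq> 0 \<Longrightarrow> v (x*y) = v x + v y"
  using discrete_valuation unfolding discrete_valuation_def by blast

lemma v_add_ge: "x \<noteq> 0 \<Longrightarrow> y \<noteq> 0 \<Longrightarrow> x + y \<noteq> 0 \<Longrightarrow> min (v x) (v y) \<le> v (x + y)"
  using discrete_valuation unfolding discrete_valuation_def by blast

lemma v_one [simp]: "v 1 = 0"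
  using v_mult[of 1 1] by simp

lemma v_inverse: "x \<noteq> 0 \<Longrightarrow> v (inverse x) = - v x"
  using v_mult[of x "inverse x"] by simp

lemma v_divide: "x \<noteq> 0 \<Longrightarrow> y \<noteq> 0 \<Longrightarrow> v (x / y) = v x - v y"
  by (simp add: divide_inverse v_mult v_inverse)

lemma v_minus [simp]: "v (- x) = v x"
proof (cases "x = 0")
  case False
  have "v (-1) = 0"
    using v_mult[of "-1" "-1"] by simp
  then show ?thesis
    using v_mult[of "-1" x] False by simp
qed simp

lemma v_power: "x \<noteq> 0 \<Longrightarrow> v (x ^ n) = int n * v x"
  by (induction n) (simp_all add: v_mult algebra_simps)

lemma v_uniformizer_powi [simp]: "v (vpi powi n) = n"
  by (cases "n \<ge> 0")
    (simp_all add: power_int_def v_power uniformizer_nonzero v_uniformizer power_inverse v_inverse)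

lemma uniformizer_powi_nonzero [simp]: "vpi powi n \<noteq> 0"
  using uniformizer_nonzero by simp

lemma v_uniformizer_powi_square: "v ((vpi powi n)^2) = 2*n"
  using v_power[OF uniformizer_powi_nonzero, of n 2] by simp

text \<open>\<open>val_ge n x\<close> says \<open>x \<in> \<pi>\<^sup>n\<O>\<close>; it avoids case distinctions on the junk value \<open>v 0\<close>.\<close>

definition val_ge :: "int \<Rightarrow> 'F \<Rightarrow> bool" where
  "val_ge n x \<longleftrightarrow> x = 0 \<or> n \<le> v x"

lemma val_ge_zero [simp]: "val_ge n 0"
  by (simp add: val_ge_def)

lemma val_ge_one [simp]: "val_ge 0 1"
  by (simp add: val_ge_def)

lemma val_ge_uniformizer [simp]: "val_ge 1 vpi"
  by (simp add: val_ge_def v_uniformizer)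

lemma val_ge_uniformizer_powi: "val_ge n (vpi powi n)"
  by (simp add: val_ge_def)

lemma val_ge_add: "val_ge n x \<Longrightarrow> val_ge n y \<Longrightarrow> val_ge n (x + y)"
  unfolding val_ge_def using v_add_ge[of x y]
  by (cases "x = 0"; cases "y = 0"; cases "x + y = 0") auto

lemma val_ge_minus [simp]: "val_ge n (- x) = val_ge n x"
  by (simp add: val_ge_def)

lemma val_ge_diff: "val_ge n x \<Longrightarrow> val_ge n y \<Longrightarrow> val_ge n (x - y)"
  using val_ge_add[of n x "-y"] by simp

lemma val_ge_mult: "val_ge n x \<Longrightarrow> val_ge m y \<Longrightarrow> val_ge (n + m) (x * y)"
  unfolding val_ge_def by (cases "x = 0"; cases "y = 0") (auto simp: v_mult)

lemma val_ge_mult_integral_left: "val_ge 0 x \<Longrightarrow> val_ge m y \<Longrightarrow> val_ge m (x * y)"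
  using val_ge_mult[of 0 x m y] by simp

lemma val_ge_mult_integral_right: "val_ge m x \<Longrightarrow> val_ge 0 y \<Longrightarrow> val_ge m (x * y)"
  using val_ge_mult[of m x 0 y] by simp

lemma val_ge_mono: "val_ge n x \<Longrightarrow> m \<le> n \<Longrightarrow> val_ge m x"
  unfolding val_ge_def by auto

lemma val_ge_divide_unit: "val_ge n x \<Longrightarrow> y \<noteq> 0 \<Longrightarrow> v y = 0 \<Longrightarrow> val_ge n (x / y)"
  unfolding val_ge_def by (cases "x = 0") (auto simp: v_divide)

lemma val_ge_divide_uniformizer: "val_ge (n + 1) x \<Longrightarrow> val_ge n (x / vpi)"
  unfolding val_ge_def by (cases "x = 0") (auto simp: v_divide uniformizer_nonzero v_uniformizer)

lemma valring_iff_val_ge: "x \<in> valring v \<longleftrightarrow> val_ge 0 x"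
  by (simp add: valring_def val_ge_def)

lemma maxideal_iff_val_ge: "x \<in> maxideal v \<longleftrightarrow> val_ge 1 x"
  by (auto simp add: maxideal_def val_ge_def)

end

section \<open>The subgroups \<open>K\<close>, \<open>I\<close>, \<open>KZ\<close> and \<open>IZ\<close>\<close>

context uniformized_valuation
begin

definition KZ :: "'F m2 set" where
  "KZ = {m2_smult (vpi powi n) h | n h. h \<in> Kmax v}"

abbreviation beta :: "'F m2" where
  "beta \<equiv> beta_mat vpi"

lemma Kmax_M2_iff:
  "M2 a b c d \<in> Kmax v \<longleftrightarrow>
     val_ge 0 a \<and> val_ge 0 b \<and> val_ge 0 c \<and> val_ge 0 d \<and> a*d - b*c \<noteq> 0 \<and> v (a*d - b*c) = 0"
  by (auto simp: Kmax_def valring_iff_val_ge)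

lemma Iwahori_M2_iff:
  "M2 a b c d \<in> Iwahori v \<longleftrightarrow>
     val_ge 0 a \<and> val_ge 0 b \<and> val_ge 1 c \<and> val_ge 0 d \<and> a*d - b*c \<noteq> 0 \<and> v (a*d - b*c) = 0"
  by (auto simp: Iwahori_def Kmax_M2_iff maxideal_iff_val_ge intro: val_ge_mono)

lemma Iwahori_imp_Kmax: "x \<in> Iwahori v \<Longrightarrow> x \<in> Kmax v"
  by (simp add: Iwahori_def)

lemma Kmax_imp_GL2: "x \<in> Kmax v \<Longrightarrow> x \<in> GL2"
  by (simp add: Kmax_def GL2_def)

lemma beta_GL2: "beta \<in> GL2"
  by (simp add: GL2_def beta_mat_def uniformizer_nonzero)

lemma m2_one_Iwahori: "m2_one \<in> Iwahori v"
  by (simp add: m2_one_def Iwahori_M2_iff)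

lemma Kmax_mult: "x \<in> Kmax v \<Longrightarrow> y \<in> Kmax v \<Longrightarrow> m2_mult x y \<in> Kmax v"
proof (cases x; cases y)
  fix a b c d a' b' c' d'
  assume x: "x \<in> Kmax v" "x = M2 a b c d" and y: "y \<in> Kmax v" "y = M2 a' b' c' d'"
  have "(a*a' + b*c') * (c*b' + d*d') - (a*b' + b*d') * (c*a' + d*c') = (a*d - b*c) * (a'*d' - b'*c')"
    by (simp add: algebra_simps)
  then show ?thesis
    using x y by (simp add: Kmax_M2_iff val_ge_add val_ge_mult_integral_left v_mult)
qed

lemma Iwahori_mult: "x \<in> Iwahori v \<Longrightarrow> y \<in> Iwahori v \<Longrightarrow> m2_mult x y \<in> Iwahori v"
proof (cases x; cases y)
  fix a b c d a' b' c' d'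
  assume x: "x \<in> Iwahori v" "x = M2 a b c d" and y: "y \<in> Iwahori v" "y = M2 a' b' c' d'"
  have "val_ge 1 c" "val_ge 0 a'" "val_ge 0 d" "val_ge 1 c'"
    using x y by (auto simp: Iwahori_M2_iff)
  then have "val_ge 1 (c*a' + d*c')"
    by (intro val_ge_add val_ge_mult_integral_left val_ge_mult_integral_right)
  then show ?thesis
    using Kmax_mult[OF Iwahori_imp_Kmax[OF x(1)] Iwahori_imp_Kmax[OF y(1)]] x(2) y(2)
    by (simp add: Iwahori_def maxideal_iff_val_ge)
qed

lemma Kmax_inv: "x \<in> Kmax v \<Longrightarrow> m2_inv x \<in> Kmax v"
proof (cases x)
  case (M2 a b c d)
  assume x: "x \<in> Kmax v"
  then have D: "a*d - b*c \<noteq> 0" "v (a*d - b*c) = 0"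
    using M2 by (auto simp: Kmax_M2_iff)
  have "m2_det (m2_inv x) = inverse (a*d - b*c)"
    using m2_det_inv[OF Kmax_imp_GL2[OF x]] M2 by simp
  moreover have "m2_inv x = M2 (d/(a*d-b*c)) (-b/(a*d-b*c)) (-c/(a*d-b*c)) (a/(a*d-b*c))"
    using M2 by (simp add: divide_inverse mult.commute)
  ultimately show ?thesis
    using x M2 D by (auto simp: Kmax_M2_iff Kmax_def valring_iff_val_ge v_inverse
        intro!: val_ge_divide_unit)
qed

lemma Iwahori_inv: "x \<in> Iwahori v \<Longrightarrow> m2_inv x \<in> Iwahori v"
proof (cases x)
  case (M2 a b c d)
  assume x: "x \<in> Iwahori v"
  then have "val_ge 1 (-c / (a*d - b*c))"
    using M2 by (auto simp: Iwahori_M2_iff intro!: val_ge_divide_unit)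
  then have "m2_lowleft (m2_inv x) \<in> maxideal v"
    using M2 by (simp add: maxideal_iff_val_ge divide_inverse mult.commute)
  then show ?thesis
    using Kmax_inv[OF Iwahori_imp_Kmax[OF x]] by (simp add: Iwahori_def)
qed

lemma smult_uniformizer_powi_mult:
  "m2_mult (m2_smult (vpi powi n) x) (m2_smult (vpi powi m) y) =
     m2_smult (vpi powi (n + m)) (m2_mult x y)"
  by (simp add: m2_smult_mult_left m2_smult_mult_right m2_smult_smult power_int_add
      uniformizer_nonzero ac_simps)

lemma IZ_mult: "x \<in> IZ v vpi \<Longrightarrow> y \<in> IZ v vpi \<Longrightarrow> m2_mult x y \<in> IZ v vpi"
  unfolding IZ_def using smult_uniformizer_powi_mult Iwahori_mult by blast

lemma KZ_mult: "x \<in> KZ \<Longrightarrow> y \<in> KZ \<Longrightarrow> m2_mult x y \<in> KZ"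
  unfolding KZ_def using smult_uniformizer_powi_mult Kmax_mult by blast

lemma m2_inv_smult_uniformizer_powi:
  "h \<in> GL2 \<Longrightarrow> m2_inv (m2_smult (vpi powi n) h) = m2_smult (vpi powi (-n)) (m2_inv h)"
  using m2_inv_smult[OF uniformizer_powi_nonzero] by (simp add: power_int_minus)

lemma IZ_inv: "x \<in> IZ v vpi \<Longrightarrow> m2_inv x \<in> IZ v vpi"
proof -
  assume "x \<in> IZ v vpi"
  then obtain n h where "x = m2_smult (vpi powi n) h" "h \<in> Iwahori v"
    unfolding IZ_def by blast
  then show ?thesis
    unfolding IZ_def using Iwahori_inv
      m2_inv_smult_uniformizer_powi[OF Kmax_imp_GL2[OF Iwahori_imp_Kmax]] by blast
qed

lemma KZ_inv: "x \<in> KZ \<Longrightarrow> m2_inv x \<in> KZ"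
proof -
  assume "x \<in> KZ"
  then obtain n h where "x = m2_smult (vpi powi n) h" "h \<in> Kmax v"
    unfolding KZ_def by blast
  then show ?thesis
    unfolding KZ_def using Kmax_inv m2_inv_smult_uniformizer_powi[OF Kmax_imp_GL2] by blast
qed

lemma scalar_IZ: "m2_smult (vpi powi n) m2_one \<in> IZ v vpi"
  unfolding IZ_def using m2_one_Iwahori by blast

lemma m2_one_IZ: "m2_one \<in> IZ v vpi"
  using scalar_IZ[of 0] by simp

lemma Kmax_KZ: "x \<in> Kmax v \<Longrightarrow> x \<in> KZ"
  unfolding KZ_def by (auto intro!: exI[of _ 0])

lemma IZ_KZ: "x \<in> IZ v vpi \<Longrightarrow> x \<in> KZ"
  unfolding IZ_def KZ_def using Iwahori_imp_Kmax by blast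

lemma KZ_GL2: "x \<in> KZ \<Longrightarrow> x \<in> GL2"
  unfolding KZ_def using Kmax_imp_GL2 by (auto simp: GL2_def m2_det_smult uniformizer_nonzero)

lemma IZ_GL2: "x \<in> IZ v vpi \<Longrightarrow> x \<in> GL2"
  using IZ_KZ KZ_GL2 by blast

lemma IZ_left_cancel: "h \<in> IZ v vpi \<Longrightarrow> m2_mult h x \<in> IZ v vpi \<Longrightarrow> x \<in> IZ v vpi"
  using IZ_mult[OF IZ_inv] m2_mult_left_cancel[OF IZ_GL2, of h x] by metis

lemma v_det_smult_uniformizer_powi:
  "h \<in> GL2 \<Longrightarrow> v (m2_det (m2_smult (vpi powi n) h)) = 2*n + v (m2_det h)"
  by (simp add: m2_det_smult v_mult GL2_def v_uniformizer_powi_square uniformizer_nonzero)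

lemma IZ_unit_det_imp_Iwahori: "h \<in> IZ v vpi \<Longrightarrow> v (m2_det h) = 0 \<Longrightarrow> h \<in> Iwahori v"
proof -
  assume h: "h \<in> IZ v vpi" "v (m2_det h) = 0"
  then obtain n h0 where h0: "h = m2_smult (vpi powi n) h0" "h0 \<in> Iwahori v"
    unfolding IZ_def by blast
  have "v (m2_det h0) = 0"
    using h0(2) by (simp add: Iwahori_def Kmax_def)
  then have "n = 0"
    using h v_det_smult_uniformizer_powi[OF Kmax_imp_GL2[OF Iwahori_imp_Kmax[OF h0(2)]]] h0(1)
    by simp
  then show ?thesis
    using h0 by simp
qed

text \<open>\<open>\<beta>\<close> normalises \<open>IZ\<close>: conjugation by \<open>\<beta>\<close> swaps the diagonal entries and moves
  \<open>\<pi>\<close> from the lower-left to the upper-right corner.\<close>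

lemma IZ_mult_beta: "h \<in> IZ v vpi \<Longrightarrow> \<exists>k\<in>IZ v vpi. m2_mult h beta = m2_mult beta k"
proof -
  assume "h \<in> IZ v vpi"
  then obtain n h0 where h: "h = m2_smult (vpi powi n) h0" "h0 \<in> Iwahori v"
    unfolding IZ_def by blast
  obtain a b c d where h0: "h0 = M2 a b c d"
    by (cases h0)
  let ?k = "M2 d (c/vpi) (vpi*b) a"
  have "c/vpi * (vpi*b) = b*c"
    using uniformizer_nonzero by simp
  then have "?k \<in> Iwahori v"
    using h(2) h0 val_ge_divide_uniformizer[of 0 c] val_ge_mult[of 1 vpi 0 b]
    by (simp add: Iwahori_M2_iff mult.commute)
  moreover have "m2_mult h beta = m2_mult beta (m2_smult (vpi powi n) ?k)"
    unfolding h(1) h0 m2_smult_mult_left m2_smult_mult_right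
    using uniformizer_nonzero by (simp add: beta_mat_def mult.commute)
  ultimately show ?thesis
    unfolding IZ_def by blast
qed

text \<open>\<open>G/IZ\<close> is the set of oriented edges of the Bruhat-Tits tree of \<open>PGL\<^sub>2(F)\<close>:
  \<open>s\<close> represents the edge from \<open>s v\<^sub>0\<close> to \<open>s \<beta> v\<^sub>0\<close>, where \<open>v\<^sub>0\<close> is the vertex fixed by \<open>KZ\<close>.\<close>

definition same_edge :: "'F m2 \<Rightarrow> 'F m2 \<Rightarrow> bool" where
  "same_edge s t \<longleftrightarrow> (\<exists>h\<in>IZ v vpi. t = m2_mult s h)"

lemma same_edge_refl: "same_edge s s"
  unfolding same_edge_def using m2_one_IZ by force

lemma same_edge_sym: "same_edge s t \<Longrightarrow> same_edge t s"
proof -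
  assume "same_edge s t"
  then obtain h where h: "h \<in> IZ v vpi" "t = m2_mult s h"
    unfolding same_edge_def by blast
  then have "s = m2_mult t (m2_inv h)"
    using m2_mult_right_cancel[OF IZ_GL2] by simp
  then show ?thesis
    unfolding same_edge_def using IZ_inv[OF h(1)] by blast
qed

lemma same_edge_trans: "same_edge s t \<Longrightarrow> same_edge t u \<Longrightarrow> same_edge s u"
  unfolding same_edge_def using IZ_mult by (auto simp: m2_mult_assoc)

lemma same_edge_if_IZ: "s \<in> IZ v vpi \<Longrightarrow> t \<in> IZ v vpi \<Longrightarrow> same_edge s t"
proof -
  assume st: "s \<in> IZ v vpi" "t \<in> IZ v vpi"
  then have "t = m2_mult s (m2_mult (m2_inv s) t)"
    using m2_mult_left_cancel'[OF IZ_GL2] by simp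
  then show ?thesis
    unfolding same_edge_def using IZ_mult[OF IZ_inv] st by blast
qed

end

section \<open>Distance from the base vertex of the tree\<close>

context uniformized_valuation
begin

definition min_entry_val :: "'F m2 \<Rightarrow> int" where
  "min_entry_val g = Min (v ` (m2_entries g - {0}))"

definition entries_val_ge :: "int \<Rightarrow> 'F m2 \<Rightarrow> bool" where
  "entries_val_ge n g \<longleftrightarrow> (\<forall>x\<in>m2_entries g. val_ge n x)"

text \<open>By the elementary divisor theorem, \<open>tree_dist g\<close> is the distance from \<open>v\<^sub>0\<close> to \<open>g v\<^sub>0\<close>.\<close>

definition tree_dist :: "'F m2 \<Rightarrow> int" where
  "tree_dist g = v (m2_det g) - 2 * min_entry_val g"

lemma finite_m2_entries: "finite (m2_entries g)"
  by (cases g) auto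

lemma GL2_has_nonzero_entry: "g \<in> GL2 \<Longrightarrow> m2_entries g - {0} \<noteq> {}"
  by (cases g) (auto simp: GL2_def)

lemma min_entry_val_le: "x \<in> m2_entries g \<Longrightarrow> x \<noteq> 0 \<Longrightarrow> min_entry_val g \<le> v x"
  unfolding min_entry_val_def using finite_m2_entries by (intro Min_le) auto

lemma min_entry_val_attained:
  "g \<in> GL2 \<Longrightarrow> \<exists>x\<in>m2_entries g. x \<noteq> 0 \<and> v x = min_entry_val g"
proof -
  assume "g \<in> GL2"
  then have "min_entry_val g \<in> v ` (m2_entries g - {0})"
    unfolding min_entry_val_def
    using finite_m2_entries GL2_has_nonzero_entry by (intro Min_in) auto
  then show ?thesis
    by auto
qed

lemma entries_val_ge_min_entry_val: "entries_val_ge (min_entry_val g) g"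
  unfolding entries_val_ge_def val_ge_def using min_entry_val_le by auto

lemma min_entry_val_greatest: "g \<in> GL2 \<Longrightarrow> entries_val_ge n g \<Longrightarrow> n \<le> min_entry_val g"
  using min_entry_val_attained unfolding entries_val_ge_def val_ge_def by fastforce

lemma min_entry_val_eqI:
  "g \<in> GL2 \<Longrightarrow> entries_val_ge n g \<Longrightarrow> x \<in> m2_entries g \<Longrightarrow> x \<noteq> 0 \<Longrightarrow> v x = n \<Longrightarrow>
     min_entry_val g = n"
  using min_entry_val_greatest min_entry_val_le by fastforce

lemma entries_val_ge_M2_iff:
  "entries_val_ge n (M2 a b c d) \<longleftrightarrow> val_ge n a \<and> val_ge n b \<and> val_ge n c \<and> val_ge n d"
  by (simp add: entries_val_ge_def)

lemma entries_val_ge_mult_Kmax: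
  "entries_val_ge n g \<Longrightarrow> k \<in> Kmax v \<Longrightarrow> entries_val_ge n (m2_mult g k)"
  by (cases g; cases k)
    (simp add: entries_val_ge_M2_iff Kmax_M2_iff val_ge_add val_ge_mult_integral_right)

lemma min_entry_val_mult_Kmax:
  "g \<in> GL2 \<Longrightarrow> k \<in> Kmax v \<Longrightarrow> min_entry_val (m2_mult g k) = min_entry_val g"
proof (rule antisym)
  assume g: "g \<in> GL2" and k: "k \<in> Kmax v"
  have gk: "m2_mult g k \<in> GL2"
    using g k Kmax_imp_GL2 GL2_mult by blast
  have "entries_val_ge (min_entry_val (m2_mult g k)) (m2_mult (m2_mult g k) (m2_inv k))"
    using entries_val_ge_mult_Kmax[OF entries_val_ge_min_entry_val Kmax_inv[OF k]] .
  then show "min_entry_val (m2_mult g k) \<le> min_entry_val g"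
    using min_entry_val_greatest[OF g] m2_mult_right_cancel[OF Kmax_imp_GL2[OF k]] by simp
  show "min_entry_val g \<le> min_entry_val (m2_mult g k)"
    using min_entry_val_greatest[OF gk] entries_val_ge_mult_Kmax[OF entries_val_ge_min_entry_val k]
    by blast
qed

lemma min_entry_val_smult:
  "g \<in> GL2 \<Longrightarrow> min_entry_val (m2_smult (vpi powi n) g) = n + min_entry_val g"
proof -
  assume g: "g \<in> GL2"
  have sg: "m2_smult (vpi powi n) g \<in> GL2"
    using g by (simp add: GL2_def m2_det_smult uniformizer_nonzero)
  obtain x where x: "x \<in> m2_entries g" "x \<noteq> 0" "v x = min_entry_val g"
    using min_entry_val_attained[OF g] by blast
  have "entries_val_ge (n + min_entry_val g) (m2_smult (vpi powi n) g)"
    using entries_val_ge_min_entry_val[of g]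
    by (cases g) (simp add: entries_val_ge_M2_iff val_ge_mult val_ge_uniformizer_powi)
  moreover have "vpi powi n * x \<in> m2_entries (m2_smult (vpi powi n) g)"
    using x(1) by (cases g) auto
  ultimately show ?thesis
    by (rule min_entry_val_eqI[OF sg])
      (use x v_mult[OF uniformizer_powi_nonzero x(2)] uniformizer_nonzero in simp_all)
qed

lemma tree_dist_mult_Kmax: "g \<in> GL2 \<Longrightarrow> k \<in> Kmax v \<Longrightarrow> tree_dist (m2_mult g k) = tree_dist g"
  unfolding tree_dist_def
  by (simp add: min_entry_val_mult_Kmax m2_det_mult v_mult GL2_iff_det Kmax_def)

lemma tree_dist_smult: "g \<in> GL2 \<Longrightarrow> tree_dist (m2_smult (vpi powi n) g) = tree_dist g"
  unfolding tree_dist_def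
  by (simp add: v_det_smult_uniformizer_powi min_entry_val_smult)

lemma tree_dist_mult_KZ: "g \<in> GL2 \<Longrightarrow> k \<in> KZ \<Longrightarrow> tree_dist (m2_mult g k) = tree_dist g"
  unfolding KZ_def
  using tree_dist_smult tree_dist_mult_Kmax GL2_mult[OF _ Kmax_imp_GL2]
  by (auto simp: m2_smult_mult_right)

lemma tree_dist_nonneg: "g \<in> GL2 \<Longrightarrow> 0 \<le> tree_dist g"
proof (cases g)
  case (M2 a b c d)
  assume g: "g \<in> GL2"
  let ?m = "min_entry_val g"
  have "val_ge (?m + ?m) (a*d - b*c)"
    using entries_val_ge_min_entry_val[of g] M2
    by (intro val_ge_diff val_ge_mult) (auto simp: entries_val_ge_M2_iff)
  then show ?thesis
    using g M2 unfolding tree_dist_def val_ge_def by (auto simp: GL2_def)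
qed

lemma tree_dist_IZ: "h \<in> IZ v vpi \<Longrightarrow> tree_dist h = 0"
proof -
  have "min_entry_val m2_one = 0"
    using min_entry_val_eqI[OF m2_one_GL2, of 0 1] by (simp add: m2_one_def entries_val_ge_M2_iff)
  then show "h \<in> IZ v vpi \<Longrightarrow> tree_dist h = 0"
    using tree_dist_mult_KZ[OF m2_one_GL2 IZ_KZ] by (simp add: tree_dist_def)
qed

lemma same_edge_tree_dist:
  assumes "t \<in> GL2" "same_edge t s"
  shows "tree_dist s = tree_dist t" "tree_dist (m2_mult s beta) = tree_dist (m2_mult t beta)"
proof -
  obtain h where h: "h \<in> IZ v vpi" "s = m2_mult t h"
    using assms(2) unfolding same_edge_def by blast
  obtain k where k: "k \<in> IZ v vpi" "m2_mult h beta = m2_mult beta k"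
    using IZ_mult_beta[OF h(1)] by blast
  have "m2_mult s beta = m2_mult (m2_mult t beta) k"
    using h(2) k(2) by (simp add: m2_mult_assoc)
  moreover note GL2_mult[OF assms(1) beta_GL2]
  ultimately show "tree_dist s = tree_dist t" "tree_dist (m2_mult s beta) = tree_dist (m2_mult t beta)"
    using tree_dist_mult_KZ[OF assms(1) IZ_KZ[OF h(1)]] tree_dist_mult_KZ[OF _ IZ_KZ[OF k(1)]] h(2)
    by simp_all
qed

end

section \<open>Edges pointing away from the base vertex\<close>

context uniformized_valuation
begin

lemma m2_mult_beta: "m2_mult (M2 a b c d) beta = M2 (b*vpi) a (d*vpi) c"
  by (simp add: beta_mat_def)

lemma beta_beta: "m2_mult beta beta = m2_smult (vpi powi 1) m2_one"
  by (simp add: beta_mat_def m2_one_def)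

lemma v_det_mult_beta: "g \<in> GL2 \<Longrightarrow> v (m2_det (m2_mult g beta)) = v (m2_det g) + 1"
  by (simp add: m2_det_mult beta_mat_def v_mult GL2_iff_det uniformizer_nonzero v_uniformizer)

lemma min_entry_val_mult_beta:
  assumes g: "g \<in> GL2"
  shows "min_entry_val g \<le> min_entry_val (m2_mult g beta)"
    and "min_entry_val (m2_mult g beta) \<le> min_entry_val g + 1"
proof -
  obtain a b c d where g_eq: "g = M2 a b c d"
    by (cases g)
  let ?m = "min_entry_val g"
  have gb: "m2_mult g beta \<in> GL2"
    using GL2_mult[OF g beta_GL2] .
  have "val_ge ?m a" "val_ge ?m b" "val_ge ?m c" "val_ge ?m d"
    using entries_val_ge_min_entry_val[of g] g_eq by (auto simp: entries_val_ge_M2_iff)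
  then have "entries_val_ge ?m (m2_mult g beta)"
    unfolding g_eq m2_mult_beta entries_val_ge_M2_iff
    by (auto intro: val_ge_mono[OF val_ge_mult[OF _ val_ge_uniformizer]])
  then show "?m \<le> min_entry_val (m2_mult g beta)"
    using min_entry_val_greatest[OF gb] by blast
  obtain x where x: "x \<in> m2_entries g" "x \<noteq> 0" "v x = ?m"
    using min_entry_val_attained[OF g] by blast
  then consider "x \<in> m2_entries (m2_mult g beta)" | "x * vpi \<in> m2_entries (m2_mult g beta)"
    using g_eq by (auto simp: m2_mult_beta)
  then show "min_entry_val (m2_mult g beta) \<le> ?m + 1"
  proof cases
    case 1
    then show ?thesis
      using min_entry_val_le[OF _ x(2)] x(3) by fastforce
  next
    case 2
    moreover have "v (x * vpi) = ?m + 1"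
      using x v_mult[OF x(2) uniformizer_nonzero] v_uniformizer by simp
    ultimately show ?thesis
      using min_entry_val_le x(2) uniformizer_nonzero by fastforce
  qed
qed

lemma tree_dist_mult_beta:
  assumes "g \<in> GL2"
  shows "tree_dist (m2_mult g beta) = tree_dist g + 1 \<or> tree_dist (m2_mult g beta) = tree_dist g - 1"
  using min_entry_val_mult_beta[OF assms] v_det_mult_beta[OF assms] unfolding tree_dist_def
  by arith

lemma first_column_val_ge_if_beta_inward:
  assumes g: "g \<in> GL2" "g = M2 a b c d" and inward: "tree_dist (m2_mult g beta) \<le> tree_dist g"
  shows "val_ge (min_entry_val g + 1) a" "val_ge (min_entry_val g + 1) c"
proof -
  have "min_entry_val g + 1 \<le> min_entry_val (m2_mult g beta)"
    using inward v_det_mult_beta[OF g(1)] unfolding tree_dist_def by simp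
  then show "val_ge (min_entry_val g + 1) a" "val_ge (min_entry_val g + 1) c"
    using entries_val_ge_min_entry_val[of "m2_mult g beta"] g(2)
    by (auto simp: m2_mult_beta entries_val_ge_M2_iff intro: val_ge_mono)
qed

lemma tree_dist_mult_beta_beta: "g \<in> GL2 \<Longrightarrow> tree_dist (m2_mult (m2_mult g beta) beta) = tree_dist g"
  using tree_dist_mult_KZ[OF _ IZ_KZ[OF scalar_IZ[of 1]]]
  by (simp add: m2_mult_assoc beta_beta)

text \<open>At a vertex \<open>g v\<^sub>0\<close> at most one edge points towards \<open>v\<^sub>0\<close>: if the edges \<open>g\<close> and \<open>g k\<close>
  with \<open>k \<in> KZ\<close> both do, then \<open>k \<in> IZ\<close>. The reason is that the first column of \<open>g\<close> is divisible
  by \<open>\<pi>\<close> relative to its minimal entry, which forces \<open>\<pi> | k\<^sub>2\<^sub>1\<close> once that of \<open>g k\<close> is too.\<close>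

lemma KZ_in_IZ_if_both_inward:
  assumes g: "g \<in> GL2" and k: "k \<in> KZ"
    and inward1: "tree_dist (m2_mult g beta) \<le> tree_dist g"
    and inward2: "tree_dist (m2_mult (m2_mult g k) beta) \<le> tree_dist g"
  shows "k \<in> IZ v vpi"
proof -
  obtain n k0 where k0: "k = m2_smult (vpi powi n) k0" "k0 \<in> Kmax v"
    using k unfolding KZ_def by blast
  obtain a b c d where g_eq: "g = M2 a b c d"
    by (cases g)
  obtain p q s t where k0_eq: "k0 = M2 p q s t"
    by (cases k0)
  let ?m = "min_entry_val g"
  have gk0: "m2_mult g k0 \<in> GL2"
    using GL2_mult[OF g Kmax_imp_GL2[OF k0(2)]] .
  have "m2_mult (m2_mult g k) beta = m2_smult (vpi powi n) (m2_mult (m2_mult g k0) beta)"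
    unfolding k0 by (simp add: m2_smult_mult_left m2_smult_mult_right)
  then have "tree_dist (m2_mult (m2_mult g k0) beta) \<le> tree_dist (m2_mult g k0)"
    using inward2 tree_dist_smult[OF GL2_mult[OF gk0 beta_GL2]] tree_dist_mult_Kmax[OF g k0(2)]
    by simp
  moreover have "m2_mult g k0 = M2 (a*p + b*s) (a*q + b*t) (c*p + d*s) (c*q + d*t)"
    using g_eq k0_eq by simp
  ultimately have col_gk0: "val_ge (?m + 1) (a*p + b*s)" "val_ge (?m + 1) (c*p + d*s)"
    using first_column_val_ge_if_beta_inward[OF gk0] min_entry_val_mult_Kmax[OF g k0(2)]
    by auto
  have col_g: "val_ge (?m + 1) a" "val_ge (?m + 1) c"
    using first_column_val_ge_if_beta_inward[OF g g_eq inward1] by auto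
  have p: "val_ge 0 p"
    using k0(2) k0_eq by (simp add: Kmax_M2_iff)
  have "val_ge (?m + 1) (b*s)" "val_ge (?m + 1) (d*s)"
    using val_ge_diff[OF col_gk0(1) val_ge_mult_integral_right[OF col_g(1) p]]
      val_ge_diff[OF col_gk0(2) val_ge_mult_integral_right[OF col_g(2) p]] by simp_all
  moreover obtain x where x: "x \<in> m2_entries g" "x \<noteq> 0" "v x = ?m"
    using min_entry_val_attained[OF g] by blast
  moreover have "x \<noteq> a" "x \<noteq> c"
    using col_g x by (auto simp: val_ge_def)
  ultimately have "val_ge (?m + 1) (x*s)"
    using g_eq by auto
  then have "val_ge 1 s"
    using x by (cases "s = 0") (auto simp: val_ge_def v_mult)
  then have "k0 \<in> Iwahori v"
    using k0(2) k0_eq by (simp add: Iwahori_def maxideal_iff_val_ge)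
  then show ?thesis
    using k0(1) unfolding IZ_def by blast
qed

text \<open>Of two distinct edges leaving the vertex \<open>s v\<^sub>0\<close>, one is not the base edge and ends
  farther from \<open>v\<^sub>0\<close> than \<open>s v\<^sub>0\<close>.\<close>

lemma far_edge_at_source:
  assumes s: "s \<in> GL2" and k: "k \<in> KZ" and distinct: "\<not> same_edge s (m2_mult s k)"
  shows "\<exists>s'\<in>{s, m2_mult s k}. s' \<notin> IZ v vpi \<and> tree_dist s + 1 \<le> tree_dist (m2_mult s' beta)"
proof -
  define t where "t = m2_mult s k"
  have t: "t \<in> GL2" "tree_dist t = tree_dist s"
    unfolding t_def using GL2_mult[OF s KZ_GL2[OF k]] tree_dist_mult_KZ[OF s k] by simp_all
  have not_both_IZ: "\<not> (s \<in> IZ v vpi \<and> t \<in> IZ v vpi)"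
    using distinct same_edge_if_IZ unfolding t_def by blast
  have outward: "tree_dist s + 1 \<le> tree_dist (m2_mult s beta) \<or> tree_dist s + 1 \<le> tree_dist (m2_mult t beta)"
  proof (rule ccontr)
    assume "\<not> ?thesis"
    then have "tree_dist (m2_mult s beta) \<le> tree_dist s" "tree_dist (m2_mult t beta) \<le> tree_dist s"
      using tree_dist_mult_beta[OF s] tree_dist_mult_beta[OF t(1)] t(2) by auto
    then have "k \<in> IZ v vpi"
      using KZ_in_IZ_if_both_inward[OF s k] unfolding t_def by blast
    then show False
      using distinct unfolding same_edge_def by blast
  qed
  show ?thesis
  proof (cases "tree_dist s = 0")
    case True
    then have "tree_dist s + 1 \<le> tree_dist (m2_mult s beta)" "tree_dist s + 1 \<le> tree_dist (m2_mult t beta)"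
      using tree_dist_mult_beta[OF s] tree_dist_mult_beta[OF t(1)] t(2)
        tree_dist_nonneg[OF GL2_mult[OF s beta_GL2]] tree_dist_nonneg[OF GL2_mult[OF t(1) beta_GL2]]
      by auto
    then show ?thesis
      using not_both_IZ unfolding t_def by blast
  next
    case False
    then have "s \<notin> IZ v vpi" "t \<notin> IZ v vpi"
      using tree_dist_IZ t(2) by auto
    then show ?thesis
      using outward unfolding t_def by blast
  qed
qed

lemma same_edge_if_same_target:
  assumes k: "k \<in> IZ v vpi" and common_target: "m2_mult u beta = m2_mult (m2_mult s beta) k"
  shows "same_edge s u"
proof -
  obtain k' where k': "k' \<in> IZ v vpi" "m2_mult k beta = m2_mult beta k'"
    using IZ_mult_beta[OF k] by blast
  have "m2_mult u (m2_mult beta beta) = m2_mult (m2_mult u beta) beta"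
    by (simp add: m2_mult_assoc)
  also have "\<dots> = m2_mult s (m2_mult beta (m2_mult k beta))"
    unfolding common_target by (simp add: m2_mult_assoc)
  also have "\<dots> = m2_mult s (m2_mult (m2_mult beta beta) k')"
    unfolding k'(2) by (simp add: m2_mult_assoc)
  finally have "m2_smult (vpi powi 1) u = m2_smult (vpi powi 1) (m2_mult s k')"
    by (simp add: beta_beta m2_smult_mult_left m2_smult_mult_right)
  then have "u = m2_mult s k'"
    by (rule m2_smult_cancel[OF uniformizer_powi_nonzero])
  then show ?thesis
    using k'(1) unfolding same_edge_def by blast
qed

text \<open>Dually, of two distinct edges entering the vertex \<open>s \<beta> v\<^sub>0\<close>, one is not the base edge and
  starts farther from \<open>v\<^sub>0\<close> than \<open>s \<beta> v\<^sub>0\<close>; reversing edges by \<open>\<beta>\<close> reduces this to the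
  argument above.\<close>

lemma far_edge_at_target:
  assumes s: "s \<in> GL2" and u: "u \<in> GL2" and k: "k \<in> KZ"
    and common_target: "m2_mult u beta = m2_mult (m2_mult s beta) k" and distinct: "\<not> same_edge s u"
  shows "\<exists>s'\<in>{s, u}. s' \<notin> IZ v vpi \<and> tree_dist (m2_mult s beta) + 1 \<le> tree_dist s'"
proof -
  define g where "g = m2_mult s beta"
  have g: "g \<in> GL2"
    unfolding g_def using GL2_mult[OF s beta_GL2] .
  have dist_s: "tree_dist (m2_mult g beta) = tree_dist s"
    unfolding g_def using tree_dist_mult_beta_beta[OF s] .
  have dist_u: "tree_dist (m2_mult (m2_mult g k) beta) = tree_dist u"
    using tree_dist_mult_beta_beta[OF u] common_target unfolding g_def by simp
  have "tree_dist (m2_mult u beta) = tree_dist g"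
    using common_target tree_dist_mult_KZ[OF g k] unfolding g_def by simp
  then have steps: "tree_dist s = tree_dist g + 1 \<or> tree_dist s = tree_dist g - 1"
    "tree_dist u = tree_dist g + 1 \<or> tree_dist u = tree_dist g - 1"
    using tree_dist_mult_beta[OF s] tree_dist_mult_beta[OF u] unfolding g_def by auto
  have not_both_IZ: "\<not> (s \<in> IZ v vpi \<and> u \<in> IZ v vpi)"
    using distinct same_edge_if_IZ by blast
  have outward: "tree_dist g + 1 \<le> tree_dist s \<or> tree_dist g + 1 \<le> tree_dist u"
  proof (rule ccontr)
    assume "\<not> ?thesis"
    then have "k \<in> IZ v vpi"
      using KZ_in_IZ_if_both_inward[OF g k] dist_s dist_u steps by auto
    then show False
      using same_edge_if_same_target common_target distinct by blast
  qed
  show ?thesis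
  proof (cases "tree_dist g = 0")
    case True
    then have "tree_dist g + 1 \<le> tree_dist s" "tree_dist g + 1 \<le> tree_dist u"
      using steps tree_dist_nonneg[OF s] tree_dist_nonneg[OF u] by auto
    then show ?thesis
      using not_both_IZ unfolding g_def by blast
  next
    case False
    then have "0 < tree_dist g"
      using tree_dist_nonneg[OF g] by simp
    then show ?thesis
      using outward tree_dist_IZ unfolding g_def by fastforce
  qed
qed

definition edge_far_dist :: "'F m2 \<Rightarrow> int" where
  "edge_far_dist s = max (tree_dist s) (tree_dist (m2_mult s beta))"

lemma edge_far_dist_le:
  assumes "s \<in> GL2"
  shows "edge_far_dist s \<le> tree_dist s + 1" "edge_far_dist s \<le> tree_dist (m2_mult s beta) + 1"
  using tree_dist_mult_beta[OF assms] unfolding edge_far_dist_def by auto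

end

section \<open>The compactly induced representation\<close>

locale ind_rep = uniformized_valuation v vpi for v :: "'F::field \<Rightarrow> int" and vpi :: 'F +
  fixes \<iota> :: "'F \<Rightarrow> 'k::field" and r :: nat
  assumes residue_map: "residue_map v \<iota>"
begin

abbreviation V :: "('F m2 \<Rightarrow> 'k) set" where
  "V \<equiv> ind_space v vpi \<iota> r"

abbreviation br :: "'F m2 \<Rightarrow> 'F m2 \<Rightarrow> 'k" where
  "br \<equiv> bracket v vpi \<iota> r"

lemma residue_add: "val_ge 0 x \<Longrightarrow> val_ge 0 y \<Longrightarrow> \<iota> (x + y) = \<iota> x + \<iota> y"
  and residue_mult: "val_ge 0 x \<Longrightarrow> val_ge 0 y \<Longrightarrow> \<iota> (x * y) = \<iota> x * \<iota> y"
  and residue_eq_0_iff: "val_ge 0 x \<Longrightarrow> \<iota> x = 0 \<longleftrightarrow> val_ge 1 x"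
  and residue_one: "\<iota> 1 = 1"
  using residue_map
  unfolding residue_map_def valring_iff_val_ge[symmetric] maxideal_iff_val_ge[symmetric] by blast+

lemma chi_smult_Iwahori:
  "h \<in> Iwahori v \<Longrightarrow> chi v vpi \<iota> r (m2_smult (vpi powi n) h) = \<iota> (m2_lowright h) ^ r"
proof (cases h)
  case (M2 a b c d)
  assume h: "h \<in> Iwahori v"
  then have val_det: "v (m2_det (m2_smult (vpi powi n) h)) div 2 = n"
    using v_det_smult_uniformizer_powi[OF Kmax_imp_GL2[OF Iwahori_imp_Kmax[OF h]]]
    by (simp add: Iwahori_def Kmax_def)
  have "vpi powi (-n) * vpi powi n = 1"
    using power_int_add[of vpi "-n" n] uniformizer_nonzero by simp
  then have unscale: "vpi powi (-n) * (vpi powi n * d) = d"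
    by (simp only: mult.assoc[symmetric] mult_1)
  have lowright: "m2_lowright (m2_smult (vpi powi n) h) = vpi powi n * d"
    using M2 by simp
  show ?thesis
    unfolding chi_def val_det lowright unscale using M2 by simp
qed

lemma chi_one: "chi v vpi \<iota> r m2_one = 1"
  using chi_smult_Iwahori[OF m2_one_Iwahori, of 0] by (simp add: m2_one_def residue_one)

lemma chi_mult:
  assumes "h1 \<in> IZ v vpi" "h2 \<in> IZ v vpi"
  shows "chi v vpi \<iota> r (m2_mult h1 h2) = chi v vpi \<iota> r h1 * chi v vpi \<iota> r h2"
proof -
  obtain n1 k1 n2 k2 where h: "h1 = m2_smult (vpi powi n1) k1" "k1 \<in> Iwahori v"
    "h2 = m2_smult (vpi powi n2) k2" "k2 \<in> Iwahori v"
    using assms unfolding IZ_def by blast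
  obtain a1 b1 c1 d1 a2 b2 c2 d2 where k: "k1 = M2 a1 b1 c1 d1" "k2 = M2 a2 b2 c2 d2"
    by (cases k1; cases k2)
  have e: "val_ge 1 c1" "val_ge 0 c1" "val_ge 0 b2" "val_ge 0 d1" "val_ge 0 d2"
    using h k by (auto simp: Iwahori_M2_iff intro: val_ge_mono)
  have "\<iota> (c1*b2 + d1*d2) = \<iota> (c1*b2) + \<iota> (d1*d2)"
    using e by (intro residue_add val_ge_mult_integral_left)
  also have "\<dots> = \<iota> d1 * \<iota> d2"
    using e residue_mult residue_eq_0_iff[of "c1*b2"]
      val_ge_mult_integral_right[OF e(1) e(3)] val_ge_mult_integral_right[OF e(2) e(3)] by simp
  finally have "\<iota> (m2_lowright (m2_mult k1 k2)) = \<iota> d1 * \<iota> d2"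
    using k by simp
  moreover have "m2_mult h1 h2 = m2_smult (vpi powi (n1 + n2)) (m2_mult k1 k2)"
    using h smult_uniformizer_powi_mult by simp
  ultimately show ?thesis
    using chi_smult_Iwahori[OF Iwahori_mult[OF h(2) h(4)]] chi_smult_Iwahori[OF h(2)]
      chi_smult_Iwahori[OF h(4)] h(1,3) k by (simp add: power_mult_distrib)
qed

lemma bracket_apply: "y \<in> GL2 \<Longrightarrow> m2_mult y g \<in> IZ v vpi \<Longrightarrow> br g y = chi v vpi \<iota> r (m2_mult y g)"
  and bracket_apply_outside: "m2_mult y g \<notin> IZ v vpi \<Longrightarrow> br g y = 0"
  by (simp_all add: bracket_def)

lemma bracket_inv_self: "g \<in> GL2 \<Longrightarrow> br g (m2_inv g) = 1"
  using bracket_apply[OF GL2_inv, of g g] m2_mult_inv_left[of g] m2_one_IZ chi_one by simp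

lemma ind_space_outside_GL2: "f \<in> V \<Longrightarrow> x \<notin> GL2 \<Longrightarrow> f x = 0"
  and ind_space_equivariant:
    "f \<in> V \<Longrightarrow> h \<in> IZ v vpi \<Longrightarrow> g \<in> GL2 \<Longrightarrow> f (m2_mult h g) = chi v vpi \<iota> r h * f g"
  unfolding ind_space_def by blast+

lemma zero_in_ind_space: "(\<lambda>_. 0) \<in> V"
  unfolding ind_space_def by auto

lemma bracket_in_ind_space: "g \<in> GL2 \<Longrightarrow> br g \<in> V"
proof -
  assume g: "g \<in> GL2"
  have "br g (m2_mult h y) = chi v vpi \<iota> r h * br g y" if h: "h \<in> IZ v vpi" and y: "y \<in> GL2" for h y
  proof (cases "m2_mult y g \<in> IZ v vpi")
    case True
    then show ?thesis
      using h y IZ_mult[OF h True] chi_mult[OF h True] GL2_mult[OF IZ_GL2[OF h] y]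
      by (simp add: bracket_def m2_mult_assoc)
  next
    case False
    then have "m2_mult (m2_mult h y) g \<notin> IZ v vpi"
      using IZ_left_cancel[OF h] by (auto simp: m2_mult_assoc)
    then show ?thesis
      using False by (simp add: bracket_def)
  qed
  moreover have "\<exists>s\<in>{m2_inv g}. \<exists>h\<in>IZ v vpi. y = m2_mult h s" if "br g y \<noteq> 0" for y
  proof -
    have "m2_mult y g \<in> IZ v vpi"
      using that by (auto simp: bracket_def split: if_splits)
    moreover have "y = m2_mult (m2_mult y g) (m2_inv g)"
      using m2_mult_right_cancel[OF g] by simp
    ultimately show ?thesis
      by blast
  qed
  moreover have "\<forall>x. x \<notin> GL2 \<longrightarrow> br g x = 0"
    by (simp add: bracket_def)
  ultimately show ?thesis
    unfolding ind_space_def using GL2_inv[OF g]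
    by (intro CollectI conjI exI[of _ "{m2_inv g}"]) auto
qed

lemma ind_space_lincomb: "f \<in> V \<Longrightarrow> f' \<in> V \<Longrightarrow> (\<lambda>x. a * f x + b * f' x) \<in> V"
proof -
  assume f: "f \<in> V" and f': "f' \<in> V"
  obtain S where S: "finite S" "S \<subseteq> GL2"
    "\<forall>g\<in>GL2. f g \<noteq> 0 \<longrightarrow> (\<exists>s\<in>S. \<exists>h\<in>IZ v vpi. g = m2_mult h s)"
    using f unfolding ind_space_def by blast
  obtain S' where S': "finite S'" "S' \<subseteq> GL2"
    "\<forall>g\<in>GL2. f' g \<noteq> 0 \<longrightarrow> (\<exists>s\<in>S'. \<exists>h\<in>IZ v vpi. g = m2_mult h s)"
    using f' unfolding ind_space_def by blast
  have "\<forall>g\<in>GL2. a * f g + b * f' g \<noteq> 0 \<longrightarrow> (\<exists>s\<in>S \<union> S'. \<exists>h\<in>IZ v vpi. g = m2_mult h s)"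
  proof (intro ballI impI)
    fix g
    assume g: "g \<in> GL2" "a * f g + b * f' g \<noteq> 0"
    then have "f g \<noteq> 0 \<or> f' g \<noteq> 0"
      by auto
    then show "\<exists>s\<in>S \<union> S'. \<exists>h\<in>IZ v vpi. g = m2_mult h s"
      using S(3) S'(3) g(1) by blast
  qed
  then show ?thesis
    using f f' S S' unfolding ind_space_def
    by (intro CollectI conjI exI[of _ "S \<union> S'"]) (auto simp: algebra_simps)
qed

lemma same_edge_if_translates_in_IZ:
  assumes "y \<in> GL2" "s \<in> GL2" "m2_mult y s \<in> IZ v vpi" "m2_mult y t \<in> IZ v vpi"
  shows "same_edge s t"
proof -
  have "t = m2_mult s (m2_mult (m2_inv (m2_mult y s)) (m2_mult y t))"
    using assms(1,2) by (simp add: m2_inv_mult m2_mult_assoc m2_mult_left_cancel m2_mult_left_cancel')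
  then show ?thesis
    unfolding same_edge_def using IZ_mult[OF IZ_inv[OF assms(3)] assms(4)] by blast
qed

lemma ind_space_edge_transversal:
  assumes f: "f \<in> V"
  obtains B where "finite B" "B \<subseteq> GL2" "\<forall>s\<in>B. \<forall>t\<in>B. same_edge s t \<longrightarrow> s = t"
    "\<forall>y\<in>GL2. f y \<noteq> 0 \<longrightarrow> (\<exists>b\<in>B. m2_mult y b \<in> IZ v vpi)"
proof -
  obtain S0 where S0: "finite S0" "S0 \<subseteq> GL2"
    "\<forall>g\<in>GL2. f g \<noteq> 0 \<longrightarrow> (\<exists>s\<in>S0. \<exists>h\<in>IZ v vpi. g = m2_mult h s)"
    using f unfolding ind_space_def by blast
  obtain B where B: "B \<subseteq> m2_inv ` S0" "\<forall>a\<in>m2_inv ` S0. \<exists>b\<in>B. same_edge b a"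
    "\<forall>b\<in>B. \<forall>b'\<in>B. same_edge b b' \<longrightarrow> b = b'"
    using finite_transversal_exists[of "m2_inv ` S0" same_edge, OF finite_imageI[OF S0(1)]
        same_edge_refl same_edge_sym] by blast
  have "\<forall>y\<in>GL2. f y \<noteq> 0 \<longrightarrow> (\<exists>b\<in>B. m2_mult y b \<in> IZ v vpi)"
  proof (intro ballI impI)
    fix y
    assume y: "y \<in> GL2" "f y \<noteq> 0"
    obtain s0 h where sh: "s0 \<in> S0" "h \<in> IZ v vpi" "y = m2_mult h s0"
      using S0(3) y by blast
    then obtain b h' where b: "b \<in> B" "h' \<in> IZ v vpi" "m2_inv s0 = m2_mult b h'"
      using B(2) unfolding same_edge_def by blast
    have "b = m2_mult (m2_inv s0) (m2_inv h')"
      using b(3) m2_mult_right_cancel[OF IZ_GL2[OF b(2)]] by simp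
    then have "m2_mult y b = m2_mult h (m2_inv h')"
      using sh S0(2) by (simp add: m2_mult_assoc m2_mult_left_cancel' subset_iff)
    then have "m2_mult y b \<in> IZ v vpi"
      using IZ_mult[OF sh(2) IZ_inv[OF b(2)]] by simp
    then show "\<exists>b\<in>B. m2_mult y b \<in> IZ v vpi"
      using b(1) by blast
  qed
  moreover have "finite B" "B \<subseteq> GL2"
    using B(1) S0(2) GL2_inv finite_subset[OF B(1) finite_imageI[OF S0(1)]] by auto
  ultimately show ?thesis
    using that[of B] B(3) by blast
qed

lemma ind_space_bracket_expansion:
  assumes f: "f \<in> V"
  obtains S where "finite S" "S \<subseteq> GL2" "\<forall>s\<in>S. \<forall>t\<in>S. same_edge s t \<longrightarrow> s = t"
    "\<forall>y. f y = (\<Sum>s\<in>S. f (m2_inv s) * br s y)"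
proof -
  obtain B where B: "finite B" "B \<subseteq> GL2" "\<forall>s\<in>B. \<forall>t\<in>B. same_edge s t \<longrightarrow> s = t"
    "\<forall>y\<in>GL2. f y \<noteq> 0 \<longrightarrow> (\<exists>b\<in>B. m2_mult y b \<in> IZ v vpi)"
    by (rule ind_space_edge_transversal[OF f])
  have "f y = (\<Sum>s\<in>B. f (m2_inv s) * br s y)" for y
  proof (cases "y \<in> GL2 \<and> (\<exists>s\<in>B. m2_mult y s \<in> IZ v vpi)")
    case True
    then obtain s where y: "y \<in> GL2" and s: "s \<in> B" "m2_mult y s \<in> IZ v vpi"
      by blast
    have sG: "s \<in> GL2"
      using s B(2) by auto
    have "br t y = 0" if t: "t \<in> B - {s}" for t
    proof (rule bracket_apply_outside, rule notI)
      assume "m2_mult y t \<in> IZ v vpi"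
      then have "same_edge s t"
        by (rule same_edge_if_translates_in_IZ[OF y sG s(2)])
      then show False
        using B(3) s(1) t by auto
    qed
    then have "(\<Sum>t\<in>B. f (m2_inv t) * br t y) = f (m2_inv s) * br s y"
      using B(1) s(1) by (simp add: sum.remove)
    also have "\<dots> = f (m2_inv s) * chi v vpi \<iota> r (m2_mult y s)"
      using bracket_apply y s(2) by simp
    also have "\<dots> = f y"
      using ind_space_equivariant[OF f s(2) GL2_inv[OF sG]] m2_mult_right_cancel[OF sG, of y]
      by (simp add: mult.commute)
    finally show ?thesis
      by simp
  next
    case False
    have "f y = 0"
    proof (rule ccontr)
      assume "f y \<noteq> 0"
      moreover from this have "y \<in> GL2"
        using ind_space_outside_GL2[OF f] by blast
      ultimately show False
        using B(4) False by blast
    qed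
    moreover have "br s y = 0" if "s \<in> B" for s
      using False that by (auto simp: bracket_def)
    ultimately show ?thesis
      by simp
  qed
  then show ?thesis
    using that[of B] B(1-3) by blast
qed

lemma bracket_expansion_coeff_nonzero:
  assumes "\<forall>y. f y = (\<Sum>s\<in>S. f (m2_inv s) * br s y)" "t \<in> GL2" "f (m2_inv t) \<noteq> 0"
  shows "\<exists>s\<in>S. f (m2_inv s) \<noteq> 0 \<and> same_edge t s"
proof -
  have "(\<Sum>s\<in>S. f (m2_inv s) * br s (m2_inv t)) \<noteq> 0"
    using assms(3) unfolding assms(1)[THEN spec, of "m2_inv t"] .
  then obtain s where s: "s \<in> S" "f (m2_inv s) * br s (m2_inv t) \<noteq> 0"
    by (rule sum.not_neutral_contains_not_neutral)
  then have "m2_mult (m2_inv t) s \<in> IZ v vpi"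
    by (auto simp: bracket_def split: if_splits)
  moreover have "s = m2_mult t (m2_mult (m2_inv t) s)"
    using m2_mult_left_cancel'[OF assms(2)] by simp
  ultimately show ?thesis
    using s unfolding same_edge_def by auto
qed

lemma G_endo_lincomb:
  "G_endo V T \<Longrightarrow> f \<in> V \<Longrightarrow> f' \<in> V \<Longrightarrow> T (\<lambda>x. a * f x + b * f' x) = (\<lambda>x. a * T f x + b * T f' x)"
  unfolding G_endo_def by blast

lemma G_endo_zero: "G_endo V T \<Longrightarrow> T (\<lambda>_. 0) = (\<lambda>_. 0)"
  using G_endo_lincomb[OF _ zero_in_ind_space zero_in_ind_space, of T 0 0] by simp

lemma G_endo_bracket_sum:
  assumes T: "G_endo V T" and S: "finite S" "S \<subseteq> GL2"
  shows "(\<lambda>y. \<Sum>s\<in>S. c s * br s y) \<in> V \<and> T (\<lambda>y. \<Sum>s\<in>S. c s * br s y) = (\<lambda>y. \<Sum>s\<in>S. c s * T (br s) y)"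
  using S
proof (induction S rule: finite_induct)
  case empty
  then show ?case
    using zero_in_ind_space G_endo_zero[OF T] by simp
next
  case (insert x S)
  then have IH: "(\<lambda>y. \<Sum>s\<in>S. c s * br s y) \<in> V"
      "T (\<lambda>y. \<Sum>s\<in>S. c s * br s y) = (\<lambda>y. \<Sum>s\<in>S. c s * T (br s) y)"
    and x: "br x \<in> V"
    using bracket_in_ind_space by auto
  have "(\<lambda>y. \<Sum>s\<in>insert x S. c s * br s y) = (\<lambda>y. 1 * (\<Sum>s\<in>S. c s * br s y) + c x * br x y)"
    "(\<lambda>y. \<Sum>s\<in>insert x S. c s * T (br s) y) = (\<lambda>y. 1 * (\<Sum>s\<in>S. c s * T (br s) y) + c x * T (br x) y)"
    using insert.hyps by (simp_all add: add.commute)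
  then show ?case
    using ind_space_lincomb[OF IH(1) x, of 1 "c x"] G_endo_lincomb[OF T IH(1) x, of 1 "c x"] IH(2)
    by simp
qed

lemma G_endo_apply_bracket_expansion:
  assumes T: "G_endo V T" and T_bracket: "\<forall>g\<in>GL2. T (br g) = (\<lambda>x. \<Sum>l\<in>L. br (m2_mult g (M l)) x)"
    and S: "finite S" "S \<subseteq> GL2" and f_eq: "\<forall>y. f y = (\<Sum>s\<in>S. f (m2_inv s) * br s y)"
  shows "T f y = (\<Sum>s\<in>S. f (m2_inv s) * (\<Sum>l\<in>L. br (m2_mult s (M l)) y))"
proof -
  have "f = (\<lambda>y. \<Sum>s\<in>S. f (m2_inv s) * br s y)"
    using f_eq by blast
  then have "T f = (\<lambda>y. \<Sum>s\<in>S. f (m2_inv s) * T (br s) y)"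
    using G_endo_bracket_sum[OF T S] by metis
  then show ?thesis
    using T_bracket S(2) by (auto intro!: sum.cong)
qed

lemma hecke_sum_at_coset_inverse:
  assumes s: "s \<in> GL2" and L: "finite L" "l0 \<in> L" and M_GL2: "\<forall>l\<in>L. M l \<in> GL2"
    and M_distinct: "\<forall>l\<in>L. l \<noteq> l0 \<longrightarrow> m2_mult (m2_inv (M l0)) (M l) \<notin> IZ v vpi"
  shows "(\<Sum>l\<in>L. br (m2_mult s (M l)) (m2_inv (m2_mult s (M l0)))) = 1"
proof -
  have g: "m2_mult s (M l0) \<in> GL2"
    using GL2_mult[OF s] M_GL2 L(2) by blast
  have "br (m2_mult s (M l)) (m2_inv (m2_mult s (M l0))) = 0" if l: "l \<in> L - {l0}" for l
  proof (rule bracket_apply_outside)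
    have "m2_mult (m2_inv (m2_mult s (M l0))) (m2_mult s (M l)) = m2_mult (m2_inv (M l0)) (M l)"
      using s M_GL2 L(2) by (auto simp: m2_inv_mult m2_mult_assoc m2_mult_left_cancel)
    then show "m2_mult (m2_inv (m2_mult s (M l0))) (m2_mult s (M l)) \<notin> IZ v vpi"
      using M_distinct l by auto
  qed
  then have "(\<Sum>l\<in>L. br (m2_mult s (M l)) (m2_inv (m2_mult s (M l0)))) =
      br (m2_mult s (M l0)) (m2_inv (m2_mult s (M l0)))"
    using L by (simp add: sum.remove)
  then show ?thesis
    using bracket_inv_self[OF g] by simp
qed

text \<open>For an operator \<open>T[g, 1] = \<Sum>\<^sub>l [g M\<^sub>l, 1]\<close>, evaluating \<open>T f = 0\<close> at \<open>(s M\<^sub>l\<^sub>0)\<^sup>-\<^sup>1\<close> shows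
  that the term of \<open>f\<close> at the edge \<open>s\<close> must be cancelled by the term at another edge \<open>s'\<close>
  with \<open>s' M\<^sub>l \<in> s M\<^sub>l\<^sub>0 IZ\<close>.\<close>

lemma kernel_expansion_other_term:
  assumes T: "G_endo V T" and T_bracket: "\<forall>g\<in>GL2. T (br g) = (\<lambda>x. \<Sum>l\<in>L. br (m2_mult g (M l)) x)"
    and L: "finite L" "l0 \<in> L" and M_GL2: "\<forall>l\<in>L. M l \<in> GL2"
    and M_distinct: "\<forall>l\<in>L. l \<noteq> l0 \<longrightarrow> m2_mult (m2_inv (M l0)) (M l) \<notin> IZ v vpi"
    and Tf: "T f = (\<lambda>_. 0)"
    and S: "finite S" "S \<subseteq> GL2" and f_eq: "\<forall>y. f y = (\<Sum>s\<in>S. f (m2_inv s) * br s y)"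
    and s1: "s1 \<in> S" "f (m2_inv s1) \<noteq> 0"
  shows "\<exists>s\<in>S. s \<noteq> s1 \<and> f (m2_inv s) \<noteq> 0 \<and>
           (\<exists>l\<in>L. \<exists>h\<in>IZ v vpi. m2_mult s (M l) = m2_mult (m2_mult s1 (M l0)) h)"
proof -
  define g where "g = m2_mult s1 (M l0)"
  have g: "g \<in> GL2"
    unfolding g_def using s1(1) S(2) M_GL2 L(2) GL2_mult by blast
  define y where "y = m2_inv g"
  have "(\<Sum>l\<in>L. br (m2_mult s1 (M l)) y) = 1"
    unfolding y_def g_def using s1(1) S(2) by (intro hecke_sum_at_coset_inverse L M_GL2 M_distinct) auto
  then have "(\<Sum>s\<in>S. f (m2_inv s) * (\<Sum>l\<in>L. br (m2_mult s (M l)) y)) =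
      f (m2_inv s1) + (\<Sum>s\<in>S - {s1}. f (m2_inv s) * (\<Sum>l\<in>L. br (m2_mult s (M l)) y))"
    using S(1) s1(1) by (simp add: sum.remove)
  moreover have "(\<Sum>s\<in>S. f (m2_inv s) * (\<Sum>l\<in>L. br (m2_mult s (M l)) y)) = 0"
    using G_endo_apply_bracket_expansion[OF T T_bracket S f_eq, of y] Tf by simp
  ultimately have "(\<Sum>s\<in>S - {s1}. f (m2_inv s) * (\<Sum>l\<in>L. br (m2_mult s (M l)) y)) \<noteq> 0"
    using s1(2) by auto
  then obtain s where s: "s \<in> S - {s1}" "f (m2_inv s) \<noteq> 0" "(\<Sum>l\<in>L. br (m2_mult s (M l)) y) \<noteq> 0"
    by (metis (no_types, lifting) mult_eq_0_iff sum.not_neutral_contains_not_neutral)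
  then obtain l where l: "l \<in> L" "br (m2_mult s (M l)) y \<noteq> 0"
    by (meson sum.not_neutral_contains_not_neutral)
  then have "m2_mult y (m2_mult s (M l)) \<in> IZ v vpi"
    by (simp add: bracket_def split: if_splits)
  moreover have "m2_mult s (M l) = m2_mult g (m2_mult y (m2_mult s (M l)))"
    unfolding y_def using m2_mult_left_cancel'[OF g] by simp
  ultimately show ?thesis
    using s l unfolding g_def by blast
qed

lemma kernel_edge_neighbour:
  assumes T: "G_endo V T" and T_bracket: "\<forall>g\<in>GL2. T (br g) = (\<lambda>x. \<Sum>l\<in>L. br (m2_mult g (M l)) x)"
    and L: "finite L" "l0 \<in> L" and M_GL2: "\<forall>l\<in>L. M l \<in> GL2"
    and M_distinct: "\<forall>l\<in>L. l \<noteq> l0 \<longrightarrow> m2_mult (m2_inv (M l0)) (M l) \<notin> IZ v vpi"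
    and f: "f \<in> V" "T f = (\<lambda>_. 0)" and s: "s \<in> GL2" "f (m2_inv s) \<noteq> 0"
  shows "\<exists>s1 s'. same_edge s s1 \<and> s' \<in> GL2 \<and> f (m2_inv s') \<noteq> 0 \<and> \<not> same_edge s1 s' \<and>
           (\<exists>l\<in>L. \<exists>h\<in>IZ v vpi. m2_mult s' (M l) = m2_mult (m2_mult s1 (M l0)) h)"
proof -
  obtain S where S: "finite S" "S \<subseteq> GL2" "\<forall>s\<in>S. \<forall>t\<in>S. same_edge s t \<longrightarrow> s = t"
    and f_eq: "\<forall>y. f y = (\<Sum>s\<in>S. f (m2_inv s) * br s y)"
    using ind_space_bracket_expansion[OF f(1)] by blast
  obtain s1 where s1: "s1 \<in> S" "f (m2_inv s1) \<noteq> 0" "same_edge s s1"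
    using bracket_expansion_coeff_nonzero[OF f_eq s] by blast
  obtain s' where s': "s' \<in> S" "s' \<noteq> s1" "f (m2_inv s') \<noteq> 0"
    "\<exists>l\<in>L. \<exists>h\<in>IZ v vpi. m2_mult s' (M l) = m2_mult (m2_mult s1 (M l0)) h"
    using kernel_expansion_other_term[OF T T_bracket L M_GL2 M_distinct f(2) S(1,2) f_eq s1(1,2)]
    by blast
  have "\<not> same_edge s1 s'"
    using S(3) s1(1) s'(1,2) by blast
  then show ?thesis
    using s1(3) s' S(2) by blast
qed

lemma ind_space_edge_far_dist_bounded:
  assumes "f \<in> V"
  obtains M where "\<forall>s. s \<in> GL2 \<and> f (m2_inv s) \<noteq> 0 \<longrightarrow> edge_far_dist s \<le> M"
proof -
  obtain S where S: "finite S" "S \<subseteq> GL2" "\<forall>s\<in>S. \<forall>t\<in>S. same_edge s t \<longrightarrow> s = t"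
    and f_eq: "\<forall>y. f y = (\<Sum>s\<in>S. f (m2_inv s) * br s y)"
    using ind_space_bracket_expansion[OF assms] by blast
  have "edge_far_dist s \<le> Max (edge_far_dist ` S)" if s: "s \<in> GL2" "f (m2_inv s) \<noteq> 0" for s
  proof -
    obtain t where t: "t \<in> S" "same_edge s t"
      using bracket_expansion_coeff_nonzero[OF f_eq s] by blast
    then have "edge_far_dist s = edge_far_dist t"
      using same_edge_tree_dist[OF s(1) t(2)] by (simp add: edge_far_dist_def)
    then show ?thesis
      using t(1) S by simp
  qed
  then show ?thesis
    by (intro that[of "Max (edge_far_dist ` S)"]) blast
qed

end

section \<open>The kernels of \<open>T\<^sub>-\<^sub>1\<^sub>,\<^sub>0\<close> and \<open>T\<^sub>1\<^sub>,\<^sub>2\<close>\<close>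

context uniformized_valuation
begin

lemma teich_unit: "2 \<le> q \<Longrightarrow> l \<in> teich q \<Longrightarrow> l \<noteq> 0 \<Longrightarrow> v l = 0"
proof -
  assume q: "2 \<le> q" and l: "l \<in> teich q" "l \<noteq> 0"
  then have "int q * v l = v l"
    using v_power[OF l(2), of q] by (simp add: teich_def)
  then have "(int q - 1) * v l = 0"
    by (simp add: algebra_simps)
  then show ?thesis
    using q by simp
qed

lemma teich_val_ge_0: "2 \<le> q \<Longrightarrow> l \<in> teich q \<Longrightarrow> val_ge 0 l"
  using teich_unit[of q l] by (cases "l = 0") (auto simp: val_ge_def)

lemma upper_coset_reps_distinct:
  "v l = 0 \<Longrightarrow> l \<noteq> 0 \<Longrightarrow> m2_mult (m2_inv (M2 vpi 0 0 1)) (M2 vpi l 0 1) \<notin> IZ v vpi"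
proof
  assume l: "v l = 0" "l \<noteq> 0" and "m2_mult (m2_inv (M2 vpi 0 0 1)) (M2 vpi l 0 1) \<in> IZ v vpi"
  moreover have "m2_mult (m2_inv (M2 vpi 0 0 1)) (M2 vpi l 0 1) = M2 1 (l/vpi) 0 1"
    using uniformizer_nonzero by (simp add: divide_inverse mult.commute)
  ultimately have "M2 1 (l/vpi) 0 1 \<in> Iwahori v"
    using IZ_unit_det_imp_Iwahori by auto
  then show False
    using l by (simp add: Iwahori_M2_iff val_ge_def v_divide uniformizer_nonzero v_uniformizer)
qed

lemma lower_coset_reps_distinct:
  "v l = 0 \<Longrightarrow> l \<noteq> 0 \<Longrightarrow>
     m2_mult (m2_inv (m2_mult beta (M2 0 1 1 0))) (m2_mult beta (M2 l 1 1 0)) \<notin> IZ v vpi"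
proof
  assume l: "v l = 0" "l \<noteq> 0"
    and "m2_mult (m2_inv (m2_mult beta (M2 0 1 1 0))) (m2_mult beta (M2 l 1 1 0)) \<in> IZ v vpi"
  moreover have "m2_mult (m2_inv (m2_mult beta (M2 0 1 1 0))) (m2_mult beta (M2 l 1 1 0)) = M2 1 0 l 1"
    using uniformizer_nonzero by (simp add: beta_mat_def)
  ultimately have "M2 1 0 l 1 \<in> Iwahori v"
    using IZ_unit_det_imp_Iwahori by auto
  then show False
    using l by (simp add: Iwahori_M2_iff val_ge_def)
qed

lemma antidiag_Kmax: "val_ge 0 l \<Longrightarrow> M2 l 1 1 0 \<in> Kmax v"
  by (simp add: Kmax_M2_iff)

lemma upper_coset_rep_mult_beta: "m2_mult (M2 vpi l 0 1) beta = m2_smult (vpi powi 1) (M2 l 1 1 0)"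
  by (simp add: beta_mat_def mult.commute)

end

lemma finite_teich: "2 \<le> q \<Longrightarrow> finite (teich q :: 'a::field set)"
proof -
  assume q: "2 \<le> q"
  let ?P = "monom (1::'a) q - [:0, 1:]"
  have "coeff ?P q = 1"
    using q by (simp add: coeff_pCons split: nat.split)
  then have "?P \<noteq> 0"
    by (metis coeff_0 zero_neq_one)
  then have "finite {x. poly ?P x = 0}"
    by (rule poly_roots_finite)
  moreover have "teich q = {x. poly ?P x = 0}"
    by (auto simp: teich_def poly_monom)
  ultimately show ?thesis
    by simp
qed

text \<open>The coset representatives \<open>\<beta> (M2 1 \<lambda> 0 1) w\<close> of \<open>T\<^sub>1\<^sub>,\<^sub>2\<close> are written as
  \<open>\<beta> (M2 \<lambda> 1 1 0)\<close>, see \<open>hecke2_coset_rep_eq\<close>.\<close>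

locale hecke_pair = ind_rep v vpi \<iota> r
  for v :: "'F::field \<Rightarrow> int" and vpi and \<iota> :: "'F \<Rightarrow> 'k::field" and r +
  fixes q :: nat and T1 T2 :: "('F m2 \<Rightarrow> 'k) \<Rightarrow> ('F m2 \<Rightarrow> 'k)"
  assumes q_ge_2: "2 \<le> q"
    and T1_endo: "G_endo V T1"
    and T1_bracket: "\<forall>g\<in>GL2. T1 (br g) = (\<lambda>x. \<Sum>l\<in>teich q. br (m2_mult g (M2 vpi l 0 1)) x)"
    and T2_endo: "G_endo V T2"
    and T2_bracket: "\<forall>g\<in>GL2. T2 (br g) = (\<lambda>x. \<Sum>l\<in>teich q. br (m2_mult g (m2_mult beta (M2 l 1 1 0))) x)"
begin

lemma zero_in_teich: "0 \<in> teich q"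
  using q_ge_2 by (simp add: teich_def)

lemma ker_T1_adjacent_edge:
  assumes f: "f \<in> V" "T1 f = (\<lambda>_. 0)" and s: "s \<in> GL2" "f (m2_inv s) \<noteq> 0"
  shows "\<exists>k\<in>KZ. f (m2_inv (m2_mult s k)) \<noteq> 0 \<and> \<not> same_edge s (m2_mult s k)"
proof -
  have "\<forall>l\<in>teich q. l \<noteq> 0 \<longrightarrow> m2_mult (m2_inv (M2 vpi 0 0 1)) (M2 vpi l 0 1) \<notin> IZ v vpi"
    using upper_coset_reps_distinct teich_unit[OF q_ge_2] by blast
  moreover have "\<forall>l\<in>teich q. M2 vpi l 0 1 \<in> GL2"
    by (simp add: GL2_def uniformizer_nonzero)
  ultimately obtain s1 s' l h where s1: "same_edge s s1" and s': "f (m2_inv s') \<noteq> 0" "\<not> same_edge s1 s'"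
    and l: "l \<in> teich q" and h: "h \<in> IZ v vpi"
    and s'_eq: "m2_mult s' (M2 vpi l 0 1) = m2_mult (m2_mult s1 (M2 vpi 0 0 1)) h"
    using kernel_edge_neighbour[OF T1_endo T1_bracket finite_teich[OF q_ge_2] zero_in_teich _ _ f s] by blast
  obtain h1 where h1: "h1 \<in> IZ v vpi" "s1 = m2_mult s h1"
    using s1 unfolding same_edge_def by blast
  obtain h2 where h2: "h2 \<in> IZ v vpi" "m2_mult h beta = m2_mult beta h2"
    using IZ_mult_beta[OF h] by blast
  \<comment> \<open>\<open>M2 \<pi> \<lambda> 0 1 \<beta> = A \<lambda> \<in> KZ\<close>, so the edges \<open>s\<close> and \<open>s'\<close> share their source vertex.\<close>
  define A where "A x = m2_smult (vpi powi 1) (M2 x 1 1 0)" for x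
  have "A x \<in> KZ" if "val_ge 0 x" for x
    unfolding A_def KZ_def using antidiag_Kmax[OF that] by blast
  then have A: "A l \<in> KZ" "A 0 \<in> KZ"
    using teich_val_ge_0[OF q_ge_2 l] by simp_all
  have "m2_mult s' (A l) = m2_mult (m2_mult s' (M2 vpi l 0 1)) beta"
    unfolding A_def upper_coset_rep_mult_beta[symmetric] by (simp only: m2_mult_assoc)
  also have "\<dots> = m2_mult (m2_mult s h1) (m2_mult (m2_mult (M2 vpi 0 0 1) beta) h2)"
    unfolding s'_eq h1(2) by (simp only: m2_mult_assoc h2(2))
  also have "\<dots> = m2_mult s (m2_mult (m2_mult h1 (A 0)) h2)"
    unfolding A_def upper_coset_rep_mult_beta by (simp only: m2_mult_assoc)
  finally have "s' = m2_mult s (m2_mult (m2_mult (m2_mult h1 (A 0)) h2) (m2_inv (A l)))"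
    using m2_mult_right_cancel[OF KZ_GL2[OF A(1)], of s'] by (simp add: m2_mult_assoc)
  moreover have "m2_mult (m2_mult (m2_mult h1 (A 0)) h2) (m2_inv (A l)) \<in> KZ"
    using KZ_mult[OF KZ_mult[OF KZ_mult[OF IZ_KZ[OF h1(1)] A(2)] IZ_KZ[OF h2(1)]] KZ_inv[OF A(1)]] .
  moreover have "\<not> same_edge s s'"
    using s1 s'(2) same_edge_sym same_edge_trans by blast
  ultimately show ?thesis
    using s'(1) by blast
qed

lemma ker_T2_adjacent_edge:
  assumes f: "f \<in> V" "T2 f = (\<lambda>_. 0)" and s: "s \<in> GL2" "f (m2_inv s) \<noteq> 0"
  shows "\<exists>u\<in>GL2. \<exists>k\<in>KZ. f (m2_inv u) \<noteq> 0 \<and> m2_mult u beta = m2_mult (m2_mult s beta) k \<and>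
           \<not> same_edge s u"
proof -
  have "\<forall>l\<in>teich q. l \<noteq> 0 \<longrightarrow>
      m2_mult (m2_inv (m2_mult beta (M2 0 1 1 0))) (m2_mult beta (M2 l 1 1 0)) \<notin> IZ v vpi"
    using lower_coset_reps_distinct teich_unit[OF q_ge_2] by blast
  moreover have "\<forall>l\<in>teich q. m2_mult beta (M2 l 1 1 0) \<in> GL2"
    using GL2_mult[OF beta_GL2] by (simp add: GL2_def)
  ultimately obtain s1 u l h where s1: "same_edge s s1"
    and u: "u \<in> GL2" "f (m2_inv u) \<noteq> 0" "\<not> same_edge s1 u"
    and l: "l \<in> teich q" and h: "h \<in> IZ v vpi"
    and u_eq: "m2_mult u (m2_mult beta (M2 l 1 1 0)) = m2_mult (m2_mult s1 (m2_mult beta (M2 0 1 1 0))) h"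
    using kernel_edge_neighbour[OF T2_endo T2_bracket finite_teich[OF q_ge_2] zero_in_teich _ _ f s] by blast
  obtain h1 where h1: "h1 \<in> IZ v vpi" "s1 = m2_mult s h1"
    using s1 unfolding same_edge_def by blast
  obtain h2 where h2: "h2 \<in> IZ v vpi" "m2_mult h1 beta = m2_mult beta h2"
    using IZ_mult_beta[OF h1(1)] by blast
  have A: "M2 l 1 1 0 \<in> KZ" "M2 0 1 1 0 \<in> KZ"
    using antidiag_Kmax teich_val_ge_0[OF q_ge_2 l] Kmax_KZ by auto
  have "m2_mult (m2_mult u beta) (M2 l 1 1 0) = m2_mult (m2_mult s (m2_mult h1 beta)) (m2_mult (M2 0 1 1 0) h)"
    using u_eq unfolding h1(2) by (simp only: m2_mult_assoc)
  also have "\<dots> = m2_mult (m2_mult s beta) (m2_mult (m2_mult h2 (M2 0 1 1 0)) h)"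
    unfolding h2(2) by (simp only: m2_mult_assoc)
  finally have "m2_mult u beta = m2_mult (m2_mult s beta) (m2_mult (m2_mult (m2_mult h2 (M2 0 1 1 0)) h) (m2_inv (M2 l 1 1 0)))"
    using m2_mult_right_cancel[OF KZ_GL2[OF A(1)], of "m2_mult u beta"] by (simp add: m2_mult_assoc)
  moreover have "m2_mult (m2_mult (m2_mult h2 (M2 0 1 1 0)) h) (m2_inv (M2 l 1 1 0)) \<in> KZ"
    using KZ_mult[OF KZ_mult[OF KZ_mult[OF IZ_KZ[OF h2(1)] A(2)] IZ_KZ[OF h]] KZ_inv[OF A(1)]] .
  moreover have "\<not> same_edge s u"
    using s1 u(3) same_edge_sym same_edge_trans by blast
  ultimately show ?thesis
    using u(1,2) by blast
qed

text \<open>Suppose \<open>f\<^sub>1 \<in> Ker T\<^sub>-\<^sub>1\<^sub>,\<^sub>0\<close> and \<open>f\<^sub>2 \<in> Ker T\<^sub>1\<^sub>,\<^sub>2\<close> cancel outside the base edge. Then the edges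
  carrying \<open>f\<^sub>1\<close> (or \<open>f\<^sub>2\<close>) run off to infinity: from any of them, a neighbouring edge at the
  source (for \<open>f\<^sub>1\<close>) and then one at the target (for \<open>f\<^sub>2\<close>) lead two steps farther from \<open>v\<^sub>0\<close>.\<close>

context
  fixes f1 f2
  assumes f1: "f1 \<in> V" "T1 f1 = (\<lambda>_. 0)" and f2: "f2 \<in> V" "T2 f2 = (\<lambda>_. 0)"
    and cancel: "\<forall>s\<in>GL2. s \<notin> IZ v vpi \<longrightarrow> f1 (m2_inv s) + f2 (m2_inv s) = 0"
begin

lemma kernel_pair_nonzero_iff:
  assumes "s \<in> GL2" "s \<notin> IZ v vpi"
  shows "f1 (m2_inv s) \<noteq> 0 \<longleftrightarrow> f2 (m2_inv s) \<noteq> 0"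
proof -
  have "f1 (m2_inv s) = - f2 (m2_inv s)"
    using cancel assms by (simp add: eq_neg_iff_add_eq_0)
  then show ?thesis
    by simp
qed

lemma kernel_pair_escape_T1:
  assumes s: "s \<in> GL2" "f1 (m2_inv s) \<noteq> 0"
  shows "\<exists>b. (b \<in> GL2 \<and> f1 (m2_inv b) \<noteq> 0) \<and> edge_far_dist s < edge_far_dist b"
proof -
  obtain k where k: "k \<in> KZ" "f1 (m2_inv (m2_mult s k)) \<noteq> 0" "\<not> same_edge s (m2_mult s k)"
    using ker_T1_adjacent_edge[OF f1 s] by blast
  obtain a where a: "a \<in> {s, m2_mult s k}" "a \<notin> IZ v vpi" "tree_dist s + 1 \<le> tree_dist (m2_mult a beta)"
    using far_edge_at_source[OF s(1) k(1) k(3)] by blast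
  have a_GL2: "a \<in> GL2"
    using a(1) s(1) GL2_mult[OF s(1) KZ_GL2[OF k(1)]] by auto
  have f2_a: "f2 (m2_inv a) \<noteq> 0"
    using a(1) s(2) k(2) kernel_pair_nonzero_iff[OF a_GL2 a(2)] by auto
  obtain u k2 where u: "u \<in> GL2" "k2 \<in> KZ" "f2 (m2_inv u) \<noteq> 0"
    "m2_mult u beta = m2_mult (m2_mult a beta) k2" "\<not> same_edge a u"
    using ker_T2_adjacent_edge[OF f2 a_GL2 f2_a] by blast
  obtain b where b: "b \<in> {a, u}" "b \<notin> IZ v vpi" "tree_dist (m2_mult a beta) + 1 \<le> tree_dist b"
    using far_edge_at_target[OF a_GL2 u(1,2,4,5)] by blast
  have b_GL2: "b \<in> GL2"
    using b(1) a_GL2 u(1) by auto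
  have "f1 (m2_inv b) \<noteq> 0"
    using b(1) f2_a u(3) kernel_pair_nonzero_iff[OF b_GL2 b(2)] by auto
  moreover have "edge_far_dist s < edge_far_dist b"
    using edge_far_dist_le(1)[OF s(1)] a(3) b(3) unfolding edge_far_dist_def[of b] by simp
  ultimately show ?thesis
    using b_GL2 by blast
qed

lemma kernel_pair_escape_T2:
  assumes s: "s \<in> GL2" "f2 (m2_inv s) \<noteq> 0"
  shows "\<exists>a. (a \<in> GL2 \<and> f2 (m2_inv a) \<noteq> 0) \<and> edge_far_dist s < edge_far_dist a"
proof -
  obtain u k2 where u: "u \<in> GL2" "k2 \<in> KZ" "f2 (m2_inv u) \<noteq> 0"
    "m2_mult u beta = m2_mult (m2_mult s beta) k2" "\<not> same_edge s u"
    using ker_T2_adjacent_edge[OF f2 s] by blast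
  obtain b where b: "b \<in> {s, u}" "b \<notin> IZ v vpi" "tree_dist (m2_mult s beta) + 1 \<le> tree_dist b"
    using far_edge_at_target[OF s(1) u(1,2,4,5)] by blast
  have b_GL2: "b \<in> GL2"
    using b(1) s(1) u(1) by auto
  have f1_b: "f1 (m2_inv b) \<noteq> 0"
    using b(1) s(2) u(3) kernel_pair_nonzero_iff[OF b_GL2 b(2)] by auto
  obtain k where k: "k \<in> KZ" "f1 (m2_inv (m2_mult b k)) \<noteq> 0" "\<not> same_edge b (m2_mult b k)"
    using ker_T1_adjacent_edge[OF f1 b_GL2 f1_b] by blast
  obtain a where a: "a \<in> {b, m2_mult b k}" "a \<notin> IZ v vpi" "tree_dist b + 1 \<le> tree_dist (m2_mult a beta)"
    using far_edge_at_source[OF b_GL2 k(1) k(3)] by blast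
  have a_GL2: "a \<in> GL2"
    using a(1) b_GL2 GL2_mult[OF b_GL2 KZ_GL2[OF k(1)]] by auto
  have "f2 (m2_inv a) \<noteq> 0"
    using a(1) f1_b k(2) kernel_pair_nonzero_iff[OF a_GL2 a(2)] by auto
  moreover have "edge_far_dist s < edge_far_dist a"
    using edge_far_dist_le(2)[OF s(1)] a(3) b(3) unfolding edge_far_dist_def[of a] by simp
  ultimately show ?thesis
    using a_GL2 by blast
qed

lemma kernel_pair_vanishes: "s \<in> GL2 \<Longrightarrow> f1 (m2_inv s) = 0 \<and> f2 (m2_inv s) = 0"
proof -
  obtain M1 where M1: "\<forall>s. s \<in> GL2 \<and> f1 (m2_inv s) \<noteq> 0 \<longrightarrow> edge_far_dist s \<le> M1"
    using ind_space_edge_far_dist_bounded[OF f1(1)] by blast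
  obtain M2 where M2: "\<forall>s. s \<in> GL2 \<and> f2 (m2_inv s) \<noteq> 0 \<longrightarrow> edge_far_dist s \<le> M2"
    using ind_space_edge_far_dist_bounded[OF f2(1)] by blast
  have "\<not> (s \<in> GL2 \<and> f1 (m2_inv s) \<noteq> 0)"
    by (rule bounded_above_no_ascent[OF M1]) (use kernel_pair_escape_T1 in blast)
  moreover have "\<not> (s \<in> GL2 \<and> f2 (m2_inv s) \<noteq> 0)"
    by (rule bounded_above_no_ascent[OF M2]) (use kernel_pair_escape_T2 in blast)
  ultimately show "s \<in> GL2 \<Longrightarrow> f1 (m2_inv s) = 0 \<and> f2 (m2_inv s) = 0"
    by blast
qed

end

lemma bracket_one_not_kernel_sum:
  "\<not> (\<exists>f1\<in>V. \<exists>f2\<in>V. T1 f1 = (\<lambda>_. 0) \<and> T2 f2 = (\<lambda>_. 0) \<and> br m2_one = (\<lambda>x. f1 x + f2 x))"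
proof
  assume "\<exists>f1\<in>V. \<exists>f2\<in>V. T1 f1 = (\<lambda>_. 0) \<and> T2 f2 = (\<lambda>_. 0) \<and> br m2_one = (\<lambda>x. f1 x + f2 x)"
  then obtain f1 f2 where f: "f1 \<in> V" "f2 \<in> V" "T1 f1 = (\<lambda>_. 0)" "T2 f2 = (\<lambda>_. 0)"
    and sum_eq: "br m2_one = (\<lambda>x. f1 x + f2 x)"
    by blast
  have sum: "br m2_one x = f1 x + f2 x" for x
    using fun_cong[OF sum_eq] by simp
  have cancel: "\<forall>s\<in>GL2. s \<notin> IZ v vpi \<longrightarrow> f1 (m2_inv s) + f2 (m2_inv s) = 0"
  proof (intro ballI impI)
    fix s
    assume that: "s \<in> GL2" "s \<notin> IZ v vpi"
    have "m2_mult (m2_inv s) m2_one \<notin> IZ v vpi"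
      using that IZ_inv[of "m2_inv s"] m2_inv_inv[OF that(1)] by auto
    then show "f1 (m2_inv s) + f2 (m2_inv s) = 0"
      using sum[of "m2_inv s"] bracket_apply_outside by simp
  qed
  have "f1 m2_one = 0 \<and> f2 m2_one = 0"
    using kernel_pair_vanishes[OF f(1,3,2,4) cancel m2_one_GL2] by simp
  moreover have "f1 m2_one + f2 m2_one = 1"
    using sum[of m2_one] bracket_inv_self[OF m2_one_GL2] by simp
  ultimately show False
    by simp
qed

end

lemma hecke2_coset_rep_eq:
  "m2_mult (m2_mult (m2_mult g b) (M2 1 l 0 1)) w_mat = m2_mult g (m2_mult b (M2 l 1 1 0))"
  by (simp add: m2_mult_assoc w_mat_def)

text \<open>Of the hypotheses on \<open>r\<close>, \<open>p\<close> and the coefficient field only \<open>q \<ge> 2\<close> (implied by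
  \<open>0 < r < q - 1\<close>) is used: the argument is purely combinatorial and works for every \<open>r\<close>.\<close>

theorem lemma3p5:
  fixes v :: "'F::field \<Rightarrow> int" and vpi :: 'F and q p r :: nat
    and \<iota> :: "'F \<Rightarrow> 'k::field"
    and T1 T2 :: "('F m2 \<Rightarrow> 'k) \<Rightarrow> ('F m2 \<Rightarrow> 'k)"
  assumes F: "padic_field v q"
    and unif: "vpi \<noteq> 0" "v vpi = 1"
    and p: "prime p" "CHAR('k) = p"
    and k_closed: "\<forall>P :: 'k poly. degree P \<noteq> 0 \<longrightarrow> (\<exists>x. poly P x = 0)"
    and k_alg: "\<forall>x :: 'k. \<exists>n>0. x ^ (p ^ n) = x"
    and red: "residue_map v \<iota>"
    and r: "0 < r" "r < q - 1"
    and T1: "G_endo (ind_space v vpi \<iota> r) T1"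
      "\<forall>g\<in>GL2. T1 (bracket v vpi \<iota> r g) =
         (\<lambda>x. \<Sum>l\<in>teich q. bracket v vpi \<iota> r (m2_mult g (M2 vpi l 0 1)) x)"
    and T2: "G_endo (ind_space v vpi \<iota> r) T2"
      "\<forall>g\<in>GL2. T2 (bracket v vpi \<iota> r g) =
         (\<lambda>x. \<Sum>l\<in>teich q. bracket v vpi \<iota> r
                 (m2_mult (m2_mult (m2_mult g (beta_mat vpi)) (M2 1 l 0 1)) w_mat) x)"
  shows "\<exists>f \<in> ind_space v vpi \<iota> r.
           \<not> (\<exists>f1 \<in> ind_space v vpi \<iota> r. \<exists>f2 \<in> ind_space v vpi \<iota> r.
                 T1 f1 = (\<lambda>_. 0) \<and> T2 f2 = (\<lambda>_. 0) \<and> f = (\<lambda>x. f1 x + f2 x))"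
proof -
  interpret hecke_pair v vpi \<iota> r q T1 T2
  proof unfold_locales
    show "discrete_valuation v"
      using F by (simp add: padic_field_def)
    show "2 \<le> q"
      using r by simp
    show "\<forall>g\<in>GL2. T2 (bracket v vpi \<iota> r g) =
        (\<lambda>x. \<Sum>l\<in>teich q. bracket v vpi \<iota> r (m2_mult g (m2_mult (beta_mat vpi) (M2 l 1 1 0))) x)"
      using T2(2) by (simp add: hecke2_coset_rep_eq)
  qed (use unif red T1 T2(1) in auto)
  show ?thesis
    using bracket_one_not_kernel_sum bracket_in_ind_space[OF m2_one_GL2] by blast
qed

end
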